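(* Let $f:\mathbb{R}^d\to\mathbb{R}$ be differentiable and $L$-Lipschitz, $c\in\mathbb{R}^d$, $r>0$, $\eta\in(0,1)$, $g=\gamma_r*f$. Sample $x\sim\mathcal N(c,r^2I_d)$ and define the random vector field \[ \ell(y)=\frac{\gamma_r(y-x)}{\gamma_r(c-x)}\,\nabla f(x)\,\chi\big((x-c)^\top(y-c)\big)\,1_{\|x-c\|\le(\sqrt d+1/\eta)r}. \] Then for every $y$ with $\|y-c\|\le\frac{\eta}{4}r$: $\|\mathbb E\,\ell(y)-\nabla g(y)\|\le 2L\exp(-\frac{1}{2\eta^2})$, $\|\ell(y)\|\le 3L$, and $\|D\ell(y)\|_{op}\le\frac{20L\sqrt d}{r\eta}$ (wherever $\ell$ is differentiable in $y$).
   Context: $\gamma_r(x)=(\sqrt{2\pi}r)^{-d}\exp(-\|x\|^2/(2r^2))$; $g(x)=\int\gamma_r(y)f(x-y)dy$. $\chi(t)=0$ if $|t|\ge r^2$, $\chi(t)=1$ if $|t|\le r^2/2$, and $\chi(t)=2-2|t|/r^2$ otherwise. $D\ell$ is the Jacobian of $\ell$ with respect to $y$ and $\|\cdot\|_{op}$ the operator norm. *)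

theory Defs
  imports "HOL-Analysis.Analysis" "HOL-Probability.Probability"
begin

definition gauss_kernel :: "real \<Rightarrow> 'a::euclidean_space \<Rightarrow> real" where
  "gauss_kernel r x = (sqrt (2 * pi) * r) powr (- real DIM('a)) * exp (- (norm x)\<^sup>2 / (2 * r\<^sup>2))"

definition gauss_smooth :: "real \<Rightarrow> ('a::euclidean_space \<Rightarrow> real) \<Rightarrow> 'a \<Rightarrow> real" where
  "gauss_smooth r f x = (\<integral>y. gauss_kernel r y * f (x - y) \<partial>lborel)"

definition gradient :: "('a::euclidean_space \<Rightarrow> real) \<Rightarrow> 'a \<Rightarrow> 'a" where
  "gradient F x = (SOME v. (F has_derivative (\<lambda>h. v \<bullet> h)) (at x))"

definition chi :: "real \<Rightarrow> real \<Rightarrow> real" where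
  "chi r t = (if \<bar>t\<bar> \<ge> r\<^sup>2 then 0 else if \<bar>t\<bar> \<le> r\<^sup>2 / 2 then 1 else 2 - 2 * \<bar>t\<bar> / r\<^sup>2)"

definition gauss_measure :: "'a::euclidean_space \<Rightarrow> real \<Rightarrow> 'a measure" where
  "gauss_measure c r = density lborel (\<lambda>x. ennreal (gauss_kernel r (x - c)))"

definition ell :: "('a::euclidean_space \<Rightarrow> real) \<Rightarrow> 'a \<Rightarrow> real \<Rightarrow> real \<Rightarrow> 'a \<Rightarrow> 'a \<Rightarrow> 'a" where
  "ell f c r \<eta> x y =
     (gauss_kernel r (y - x) / gauss_kernel r (c - x) * chi r ((x - c) \<bullet> (y - c))
      * (if norm (x - c) \<le> (sqrt (real DIM('a)) + 1 / \<eta>) * r then 1 else 0)) *\<^sub>R gradient f x"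

end

(*
  Writing u = x - c and completing the square,
    gamma_r(z - x) / gamma_r(c - x) = exp(u.(z - c) / r^2) * exp(-|z - c|^2 / (2 r^2)),
  so ell(z) is grad f(x) times the weight exp(t / r^2) chi(t) exp(-|z - c|^2 / (2 r^2)) with
  t = u.(z - c), switched off unless |u| <= (sqrt d + 1/eta) r. As chi vanishes for |t| >= r^2,
  the weight is at most e <= 3, whence |ell| <= 3L; the tilted cutoff exp(t / r^2) chi(t) is
  (2e / r^2)-Lipschitz, so on the support of the indicator the weight is Lipschitz in z with
  constant O((sqrt d + 1/eta) / r), which bounds every derivative of ell.

  For the bias, E ell(y) = int gamma_r(y - x) chi(..) 1(..) grad f(x) dx, while differentiation
  under the integral (dominated by 2 L gamma_r, by the Lipschitz bound) gives
  grad g(y) = int gamma_r(y - x) grad f(x) dx. The integrands differ only where a cutoff is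
  active, i.e. where x - y is long or has a large component along +-(y - c); Chernoff bounds
  from the Gaussian moment generating functions of |x|^2 and of linear forms control these
  three events.
*)

theory Submission
  imports Defs
begin

section \<open>The Gaussian kernel\<close>

lemma power2_norm_eq_sum_Basis: "(norm x)\<^sup>2 = (\<Sum>b\<in>Basis. (x \<bullet> b)\<^sup>2)"
  for x :: "'a::euclidean_space"
  unfolding power2_norm_eq_inner by (subst euclidean_inner) (simp add: power2_eq_square)

lemma gauss_kernel_eq_prod_normal_density:
  assumes "r > 0"
  shows "gauss_kernel r (x::'a::euclidean_space) = (\<Prod>b\<in>Basis. normal_density 0 r (x \<bullet> b))"
proof -
  have s: "sqrt (2 * pi * r\<^sup>2) = sqrt (2 * pi) * r"
    using assms by (simp add: real_sqrt_mult)
  have "(\<Prod>b\<in>Basis. normal_density 0 r (x \<bullet> b)) =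
        (\<Prod>b\<in>Basis. (1 / (sqrt (2 * pi) * r)) * exp (- (x \<bullet> b)\<^sup>2 / (2 * r\<^sup>2)))"
    by (simp add: normal_density_def s)
  also have "\<dots> = (1 / (sqrt (2 * pi) * r)) ^ DIM('a) * exp (\<Sum>b\<in>Basis. - (x \<bullet> b)\<^sup>2 / (2 * r\<^sup>2))"
    by (subst prod.distrib) (simp add: exp_sum)
  also have "(\<Sum>b\<in>Basis. - (x \<bullet> b)\<^sup>2 / (2 * r\<^sup>2)) = - (norm x)\<^sup>2 / (2 * r\<^sup>2)"
    by (simp add: power2_norm_eq_sum_Basis sum_divide_distrib sum_negf)
  also have "(1 / (sqrt (2 * pi) * r)) ^ DIM('a) = (sqrt (2 * pi) * r) powr (- real DIM('a))"
    using assms by (simp add: powr_minus powr_realpow divide_inverse power_inverse power_mult_distrib)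
  finally show ?thesis by (simp add: gauss_kernel_def)
qed

lemma nn_integral_normal_density:
  assumes "\<sigma> > 0"
  shows "(\<integral>\<^sup>+t. ennreal (normal_density \<mu> \<sigma> t) \<partial>lborel) = 1"
  using assms by (subst nn_integral_eq_integral) (auto intro: integrable_normal_density integral_normal_density)

lemma gauss_kernel_pos: "r > 0 \<Longrightarrow> 0 < gauss_kernel r x"
  by (simp add: gauss_kernel_def)

lemma gauss_kernel_nonneg: "r > 0 \<Longrightarrow> 0 \<le> gauss_kernel r x"
  by (simp add: gauss_kernel_def)

lemma gauss_kernel_minus_commute: "gauss_kernel r (x - y) = gauss_kernel r (y - x)"
  by (simp add: gauss_kernel_def norm_minus_commute)

lemma continuous_on_gauss_kernel: "continuous_on UNIV (gauss_kernel r)"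
  unfolding gauss_kernel_def[abs_def] by (cases "r = 0") (auto intro!: continuous_intros)

lemma borel_measurable_gauss_kernel[measurable]: "gauss_kernel r \<in> borel_measurable borel"
  using continuous_on_gauss_kernel by (rule borel_measurable_continuous_onI)

lemma nn_integral_gauss_kernel:
  assumes "r > 0"
  shows "(\<integral>\<^sup>+x. ennreal (gauss_kernel r (x::'a::euclidean_space)) \<partial>lborel) = 1"
proof -
  have "(\<integral>\<^sup>+x. ennreal (gauss_kernel r (x::'a)) \<partial>lborel)
      = (\<integral>\<^sup>+x. (\<Prod>b\<in>Basis. ennreal (normal_density 0 r ((x::'a) \<bullet> b))) \<partial>lborel)"
    using assms by (simp add: gauss_kernel_eq_prod_normal_density prod_ennreal)
  also have "\<dots> = (\<Prod>b\<in>(Basis::'a set). (\<integral>\<^sup>+t. ennreal (normal_density 0 r t) \<partial>lborel))"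
    by (rule nn_integral_lborel_prod) auto
  also have "\<dots> = 1" using assms by (simp add: nn_integral_normal_density)
  finally show ?thesis .
qed

lemma integrable_gauss_kernel:
  assumes "r > 0"
  shows "integrable lborel (gauss_kernel r :: 'a::euclidean_space \<Rightarrow> real)"
  by (rule integrableI_nn_integral_finite[where x=1])
     (use assms nn_integral_gauss_kernel[OF assms] gauss_kernel_nonneg in auto)

text \<open>Completing the square reduces both moment generating functions below to the normalisation of
  a one-dimensional normal density, coordinate by coordinate.\<close>

lemma normal_density_mult_exp_linear:
  assumes "r > 0"
  shows "normal_density 0 r t * exp (a * t) = exp (a\<^sup>2 * r\<^sup>2 / 2) * normal_density (a * r\<^sup>2) r t"
proof -
  have "- t\<^sup>2 / (2 * r\<^sup>2) + a * t = a\<^sup>2 * r\<^sup>2 / 2 + (- (t - a * r\<^sup>2)\<^sup>2 / (2 * r\<^sup>2))"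
    using assms by (simp add: field_simps power2_eq_square)
  then have "exp (- t\<^sup>2 / (2 * r\<^sup>2)) * exp (a * t)
      = exp (a\<^sup>2 * r\<^sup>2 / 2) * exp (- (t - a * r\<^sup>2)\<^sup>2 / (2 * r\<^sup>2))"
    by (metis exp_add)
  then show ?thesis unfolding normal_density_def by (simp add: mult_ac)
qed

lemma nn_integral_gauss_kernel_exp_inner:
  assumes "r > 0"
  shows "(\<integral>\<^sup>+x. ennreal (gauss_kernel r (x::'a::euclidean_space) * exp (w \<bullet> x)) \<partial>lborel)
     = ennreal (exp (r\<^sup>2 * (norm w)\<^sup>2 / 2))"
proof -
  have e: "exp (w \<bullet> x) = (\<Prod>b\<in>Basis. exp ((w \<bullet> b) * (x \<bullet> b)))" for x
    by (subst euclidean_inner) (simp add: exp_sum)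
  have coord: "(\<integral>\<^sup>+t. ennreal (normal_density 0 r t * exp ((w \<bullet> b) * t)) \<partial>lborel)
      = ennreal (exp ((w \<bullet> b)\<^sup>2 * r\<^sup>2 / 2))" for b
    using assms by (simp add: normal_density_mult_exp_linear ennreal_mult nn_integral_cmult
        nn_integral_normal_density)
  have "(\<integral>\<^sup>+x. ennreal (gauss_kernel r (x::'a) * exp (w \<bullet> x)) \<partial>lborel)
      = (\<integral>\<^sup>+x. (\<Prod>b\<in>Basis. ennreal (normal_density 0 r ((x::'a) \<bullet> b) * exp ((w \<bullet> b) * (x \<bullet> b)))) \<partial>lborel)"
    using assms
    by (simp add: gauss_kernel_eq_prod_normal_density e prod_ennreal prod.distrib[symmetric] mult.assoc)
  also have "\<dots> = (\<Prod>b\<in>(Basis::'a set). (\<integral>\<^sup>+t. ennreal (normal_density 0 r t * exp ((w \<bullet> b) * t)) \<partial>lborel))"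
    by (rule nn_integral_lborel_prod[where f="\<lambda>b t. ennreal (normal_density 0 r t * exp ((w \<bullet> b) * t))"])
       auto
  also have "\<dots> = ennreal (exp (\<Sum>b\<in>(Basis::'a set). (w \<bullet> b)\<^sup>2 * r\<^sup>2 / 2))"
    by (simp add: coord prod_ennreal exp_sum)
  also have "(\<Sum>b\<in>(Basis::'a set). (w \<bullet> b)\<^sup>2 * r\<^sup>2 / 2) = r\<^sup>2 * (norm w)\<^sup>2 / 2"
    by (simp add: power2_norm_eq_sum_Basis sum_divide_distrib[symmetric] sum_distrib_left[symmetric]
        mult.commute)
  finally show ?thesis .
qed

lemma normal_density_mult_exp_square:
  assumes "r > 0" "0 < q" "q = 1 - 2 * m * r\<^sup>2"
  shows "normal_density 0 r t * exp (m * t\<^sup>2) = (1 / sqrt q) * normal_density 0 (r / sqrt q) t"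
proof -
  have sq: "sqrt (2 * pi * (r / sqrt q)\<^sup>2) = sqrt (2 * pi * r\<^sup>2) / sqrt q"
    using assms by (simp add: power_divide real_sqrt_divide)
  have ex: "- t\<^sup>2 / (2 * r\<^sup>2) + m * t\<^sup>2 = - t\<^sup>2 / (2 * (r / sqrt q)\<^sup>2)"
    using assms(1,2) unfolding assms(3) by (simp add: power_divide field_simps)
  have "normal_density 0 r t * exp (m * t\<^sup>2) = 1 / sqrt (2 * pi * r\<^sup>2) * exp (- t\<^sup>2 / (2 * r\<^sup>2) + m * t\<^sup>2)"
    unfolding normal_density_def by (simp add: mult_exp_exp add.commute)
  also have "\<dots> = (1 / sqrt q) * normal_density 0 (r / sqrt q) t"
    unfolding ex normal_density_def sq using assms by simp
  finally show ?thesis .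
qed

lemma nn_integral_gauss_kernel_exp_norm_square:
  assumes "r > 0" "0 < q" "q = 1 - 2 * m * r\<^sup>2"
  shows "(\<integral>\<^sup>+x. ennreal (gauss_kernel r (x::'a::euclidean_space) * exp (m * (norm x)\<^sup>2)) \<partial>lborel)
     = ennreal (q powr (- real DIM('a) / 2))"
proof -
  have e: "exp (m * (norm x)\<^sup>2) = (\<Prod>b\<in>Basis. exp (m * (x \<bullet> b)\<^sup>2))" for x :: 'a
    by (simp add: power2_norm_eq_sum_Basis sum_distrib_left exp_sum)
  have "(\<integral>\<^sup>+t. ennreal (normal_density 0 r t * exp (m * t\<^sup>2)) \<partial>lborel)
      = (\<integral>\<^sup>+t. ennreal (1 / sqrt q) * ennreal (normal_density 0 (r / sqrt q) t) \<partial>lborel)"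
    using assms by (simp add: normal_density_mult_exp_square[OF assms] ennreal_mult[symmetric])
  also have "\<dots> = ennreal (1 / sqrt q)"
    using assms by (simp add: nn_integral_cmult nn_integral_normal_density)
  finally have coord: "(\<integral>\<^sup>+t. ennreal (normal_density 0 r t * exp (m * t\<^sup>2)) \<partial>lborel)
      = ennreal (1 / sqrt q)" .
  have "(\<integral>\<^sup>+x. ennreal (gauss_kernel r (x::'a) * exp (m * (norm x)\<^sup>2)) \<partial>lborel)
      = (\<integral>\<^sup>+x. (\<Prod>b\<in>Basis. ennreal (normal_density 0 r ((x::'a) \<bullet> b) * exp (m * (x \<bullet> b)\<^sup>2))) \<partial>lborel)"
    using assms
    by (simp add: gauss_kernel_eq_prod_normal_density e prod_ennreal prod.distrib[symmetric] mult.assoc)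
  also have "\<dots> = (\<Prod>b\<in>(Basis::'a set). (\<integral>\<^sup>+t. ennreal (normal_density 0 r t * exp (m * t\<^sup>2)) \<partial>lborel))"
    by (rule nn_integral_lborel_prod[where f="\<lambda>b t. ennreal (normal_density 0 r t * exp (m * t\<^sup>2))"]) auto
  also have "\<dots> = ennreal ((1 / sqrt q) ^ DIM('a))"
    using assms by (simp add: coord prod_ennreal ennreal_power)
  also have "(1 / sqrt q) ^ DIM('a) = q powr (- real DIM('a) / 2)"
  proof -
    have "1 / sqrt q = q powr (-1/2)"
      using assms(2) by (simp add: powr_minus_divide powr_half_sqrt)
    then show ?thesis
      using assms(2) by (simp add: powr_realpow[symmetric] powr_powr)
  qed
  finally show ?thesis .
qed

lemma integrable_gauss_kernel_mult_norm:
  assumes r: "r > 0"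
  shows "integrable lborel (\<lambda>t::'a::euclidean_space. gauss_kernel r t * norm t)"
proof (rule Bochner_Integration.integrable_bound)
  define m where "m = 1 / (4 * r\<^sup>2)"
  have "(1/2::real) = 1 - 2 * m * r\<^sup>2" unfolding m_def using r by simp
  from nn_integral_gauss_kernel_exp_norm_square[OF r _ this]
  have "integrable lborel (\<lambda>t::'a. gauss_kernel r t * exp (m * (norm t)\<^sup>2))"
    by (intro integrableI_nn_integral_finite) (auto simp: gauss_kernel_nonneg[OF r])
  then show "integrable lborel (\<lambda>t::'a. 2 * r * (gauss_kernel r t * exp (m * (norm t)\<^sup>2)))"
    by simp
  show "AE x in lborel. norm (gauss_kernel r (x::'a) * norm x)
                        \<le> norm (2 * r * (gauss_kernel r x * exp (m * (norm x)\<^sup>2)))"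
  proof (rule AE_I2)
    fix x :: 'a
    define u where "u = norm x / (2 * r)"
    have "0 \<le> (u - 1/2)\<^sup>2" by simp
    then have "u \<le> 1 + u\<^sup>2" by (simp add: power2_diff field_simps)
    also have "\<dots> \<le> exp (u\<^sup>2)" by (rule exp_ge_add_one_self)
    also have "u\<^sup>2 = m * (norm x)\<^sup>2" unfolding u_def m_def by (simp add: power_divide field_simps)
    finally have "norm x \<le> 2 * r * exp (m * (norm x)\<^sup>2)" unfolding u_def using r by (simp add: field_simps)
    then have "gauss_kernel r x * norm x \<le> gauss_kernel r x * (2 * r * exp (m * (norm x)\<^sup>2))"
      using gauss_kernel_nonneg[OF r] by (intro mult_left_mono) auto
    then show "norm (gauss_kernel r x * norm x) \<le> norm (2 * r * (gauss_kernel r x * exp (m * (norm x)\<^sup>2)))"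
      using r gauss_kernel_nonneg[OF r, of x] by (simp add: abs_mult mult_ac)
  qed
qed simp

section \<open>Gaussian tail bounds\<close>

lemma nn_integral_lborel_translate:
  fixes F :: "'a::euclidean_space \<Rightarrow> ennreal"
  assumes [measurable]: "F \<in> borel_measurable borel"
  shows "(\<integral>\<^sup>+x. F (x - y) \<partial>lborel) = (\<integral>\<^sup>+x. F x \<partial>lborel)"
proof -
  have "(\<integral>\<^sup>+x. F x \<partial>lborel) = (\<integral>\<^sup>+x. F x \<partial>(distr lborel borel ((+) (-y))))"
    by (simp add: lborel_distr_plus)
  also have "\<dots> = (\<integral>\<^sup>+x. F (-y + x) \<partial>lborel)"
    by (subst nn_integral_distr) auto
  finally show ?thesis by simp
qed

lemma distr_lborel_reflect: "distr lborel borel (\<lambda>x. y - x) = (lborel :: 'a::euclidean_space measure)"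
proof -
  have "(lborel :: 'a measure)
      = density (distr lborel borel (\<lambda>x. y + (-1) *\<^sub>R x)) (\<lambda>_. \<bar>-1::real\<bar> ^ DIM('a))"
    by (rule lborel_affine) simp
  then show ?thesis by (simp add: density_1)
qed

lemma integral_lborel_reflect:
  fixes F :: "'a::euclidean_space \<Rightarrow> 'b::{banach, second_countable_topology}"
  assumes [measurable]: "F \<in> borel_measurable borel"
  shows "(\<integral>x. F (y - x) \<partial>lborel) = (\<integral>x. F x \<partial>lborel)"
proof -
  have "(\<integral>x. F x \<partial>lborel) = (\<integral>x. F x \<partial>(distr lborel borel (\<lambda>x. y - x)))"
    by (simp add: distr_lborel_reflect)
  also have "\<dots> = (\<integral>x. F (y - x) \<partial>lborel)"
    by (subst integral_distr) auto
  finally show ?thesis by simp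
qed

lemma integrable_lborel_reflect_iff:
  fixes F :: "'a::euclidean_space \<Rightarrow> 'b::{banach, second_countable_topology}"
  assumes [measurable]: "F \<in> borel_measurable borel"
  shows "integrable lborel (\<lambda>x. F (y - x)) \<longleftrightarrow> integrable lborel F"
proof -
  have "integrable lborel F \<longleftrightarrow> integrable (distr lborel borel (\<lambda>x. y - x)) F"
    by (simp add: distr_lborel_reflect)
  also have "\<dots> \<longleftrightarrow> integrable lborel (\<lambda>x. F (y - x))"
    by (subst integrable_distr_eq) auto
  finally show ?thesis by simp
qed

lemma integral_gauss_kernel_translate_le:
  fixes J :: "'a::euclidean_space \<Rightarrow> real"
  assumes r: "r > 0" and [measurable]: "J \<in> borel_measurable borel" and J: "\<And>x. 0 \<le> J x"
    and bound: "(\<integral>\<^sup>+x. ennreal (gauss_kernel r x * J x) \<partial>lborel) \<le> ennreal \<beta>" and \<beta>: "0 \<le> \<beta>"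
  shows "(\<integral>x. gauss_kernel r (y - x) * J (x - y) \<partial>lborel) \<le> \<beta>"
proof -
  have "(\<integral>x. gauss_kernel r (y - x) * J (x - y) \<partial>lborel)
      = enn2real (\<integral>\<^sup>+x. ennreal (gauss_kernel r (x - y) * J (x - y)) \<partial>lborel)"
    by (subst integral_eq_nn_integral)
       (auto simp: gauss_kernel_nonneg[OF r] J gauss_kernel_minus_commute)
  also have "(\<integral>\<^sup>+x. ennreal (gauss_kernel r (x - y) * J (x - y)) \<partial>lborel)
      = (\<integral>\<^sup>+x. ennreal (gauss_kernel r x * J x) \<partial>lborel)"
    by (rule nn_integral_lborel_translate[where F="\<lambda>z. ennreal (gauss_kernel r z * J z)"]) measurable
  finally show ?thesis using bound \<beta> by (simp add: enn2real_leI)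
qed

lemma exp_chernoff_norm_exponent_le:
  fixes k s :: real
  assumes "0 < k" "k \<le> s"
  shows "exp (- (s\<^sup>2 - k\<^sup>2) / 2) * (k\<^sup>2 / s\<^sup>2) powr (- k\<^sup>2 / 2) \<le> exp (- (s - k)\<^sup>2 / 2)"
proof -
  have s: "0 < s" using assms by linarith
  have "k\<^sup>2 * ln (s / k) \<le> k\<^sup>2 * (s / k - 1)"
    using assms s by (intro mult_left_mono ln_le_minus_one) auto
  also have "\<dots> = s * k - k\<^sup>2" using assms by (simp add: field_simps power2_eq_square)
  finally have "- (s\<^sup>2 - k\<^sup>2) / 2 + k\<^sup>2 * ln (s / k) \<le> - (s - k)\<^sup>2 / 2"
    by (simp add: power2_diff field_simps)
  moreover have "(k\<^sup>2 / s\<^sup>2) powr (- k\<^sup>2 / 2) = exp (k\<^sup>2 * ln (s / k))"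
    using assms s by (simp add: powr_def ln_div ln_mult power2_eq_square field_simps)
  ultimately show ?thesis by (simp add: mult_exp_exp)
qed

text \<open>Chernoff bound through the moment generating function of \<open>\<parallel>x\<parallel>\<^sup>2\<close>, optimised at
  \<open>q = d / s\<^sup>2\<close>.\<close>

lemma nn_integral_gauss_kernel_norm_tail:
  fixes r s :: real
  assumes r: "r > 0" and s: "sqrt (real DIM('a)) \<le> s"
  shows "(\<integral>\<^sup>+x. ennreal (gauss_kernel r (x::'a::euclidean_space) * indicator {x. s * r < norm x} x) \<partial>lborel)
         \<le> ennreal (exp (- (s - sqrt (real DIM('a)))\<^sup>2 / 2))"
proof -
  define k where "k = sqrt (real DIM('a))"
  have k: "0 < k" "k \<le> s" "real DIM('a) = k\<^sup>2" using s unfolding k_def by auto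
  have s0: "s > 0" using k by linarith
  define m where "m = (1 - k\<^sup>2 / s\<^sup>2) / (2 * r\<^sup>2)"
  define q where "q = k\<^sup>2 / s\<^sup>2"
  have q0: "q > 0" unfolding q_def using k s0 by simp
  have qm: "q = 1 - 2 * m * r\<^sup>2" unfolding q_def m_def using r by (simp add: field_simps)
  have m0: "m \<ge> 0" unfolding m_def using k s0 by (simp add: field_simps power_mono)
  have pointwise: "ennreal (gauss_kernel r x * indicator {x. s * r < norm x} x)
        \<le> ennreal (exp (- m * s\<^sup>2 * r\<^sup>2)) * ennreal (gauss_kernel r x * exp (m * (norm x)\<^sup>2))" for x :: 'a
  proof (cases "s * r < norm x")
    case True
    have "(s * r)\<^sup>2 \<le> (norm x)\<^sup>2" using True s0 r by (intro power_mono) auto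
    then have "m * (s * r)\<^sup>2 \<le> m * (norm x)\<^sup>2" using m0 by (intro mult_left_mono) auto
    then have "1 \<le> exp (- m * s\<^sup>2 * r\<^sup>2) * exp (m * (norm x)\<^sup>2)"
      by (simp add: mult_exp_exp power_mult_distrib)
    then have "gauss_kernel r x * 1 \<le> gauss_kernel r x * (exp (- m * s\<^sup>2 * r\<^sup>2) * exp (m * (norm x)\<^sup>2))"
      using gauss_kernel_nonneg[OF r] by (intro mult_left_mono) auto
    then show ?thesis using True
      by (simp add: ennreal_mult[symmetric] mult_ac gauss_kernel_nonneg[OF r])
  qed (simp add: gauss_kernel_nonneg[OF r])
  have "(\<integral>\<^sup>+x. ennreal (gauss_kernel r (x::'a) * indicator {x. s * r < norm x} x) \<partial>lborel)
     \<le> (\<integral>\<^sup>+x. ennreal (exp (- m * s\<^sup>2 * r\<^sup>2)) * ennreal (gauss_kernel r (x::'a) * exp (m * (norm x)\<^sup>2)) \<partial>lborel)"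
    by (intro nn_integral_mono pointwise)
  also have "\<dots> = ennreal (exp (- m * s\<^sup>2 * r\<^sup>2) * q powr (- real DIM('a) / 2))"
    by (subst nn_integral_cmult)
       (auto simp: nn_integral_gauss_kernel_exp_norm_square[OF r q0 qm] ennreal_mult)
  also have "exp (- m * s\<^sup>2 * r\<^sup>2) * q powr (- real DIM('a) / 2)
      = exp (- (s\<^sup>2 - k\<^sup>2) / 2) * (k\<^sup>2 / s\<^sup>2) powr (- k\<^sup>2 / 2)"
    unfolding m_def q_def k(3) using r s0 by (simp add: field_simps)
  also have "\<dots> \<le> exp (- (s - k)\<^sup>2 / 2)"
    by (rule exp_chernoff_norm_exponent_le[OF k(1,2)])
  finally show ?thesis unfolding k_def by (simp add: ennreal_leI)
qed

text \<open>Chernoff bound through the moment generating function of the linear form \<open>w \<bullet> x\<close>.\<close>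

lemma nn_integral_gauss_kernel_halfspace_tail:
  fixes r a :: real and w :: "'a::euclidean_space"
  assumes r: "r > 0" and w: "w \<noteq> 0" and a: "a > 0"
  shows "(\<integral>\<^sup>+x. ennreal (gauss_kernel r x * indicator {x. a < w \<bullet> x} x) \<partial>lborel)
         \<le> ennreal (exp (- a\<^sup>2 / (2 * r\<^sup>2 * (norm w)\<^sup>2)))"
proof -
  define m where "m = a / (r\<^sup>2 * (norm w)\<^sup>2)"
  have nw: "norm w > 0" using w by simp
  have m0: "m > 0" unfolding m_def using a r nw by simp
  have pointwise: "ennreal (gauss_kernel r x * indicator {x. a < w \<bullet> x} x)
        \<le> ennreal (exp (- m * a)) * ennreal (gauss_kernel r x * exp ((m *\<^sub>R w) \<bullet> x))" for x :: 'a
  proof (cases "a < w \<bullet> x")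
    case True
    have "m * a \<le> m * (w \<bullet> x)" using True m0 by simp
    then have "1 \<le> exp (- m * a) * exp ((m *\<^sub>R w) \<bullet> x)"
      by (simp add: mult_exp_exp)
    then have "gauss_kernel r x * 1 \<le> gauss_kernel r x * (exp (- m * a) * exp ((m *\<^sub>R w) \<bullet> x))"
      using gauss_kernel_nonneg[OF r] by (intro mult_left_mono) auto
    then show ?thesis using True
      by (simp add: ennreal_mult[symmetric] mult_ac gauss_kernel_nonneg[OF r])
  qed (simp add: gauss_kernel_nonneg[OF r])
  have "(\<integral>\<^sup>+x. ennreal (gauss_kernel r x * indicator {x. a < w \<bullet> x} x) \<partial>lborel)
     \<le> (\<integral>\<^sup>+x. ennreal (exp (- m * a)) * ennreal (gauss_kernel r x * exp ((m *\<^sub>R w) \<bullet> x)) \<partial>lborel)"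
    by (intro nn_integral_mono pointwise)
  also have "\<dots> = ennreal (exp (- m * a)) * ennreal (exp (r\<^sup>2 * (norm (m *\<^sub>R w))\<^sup>2 / 2))"
    by (subst nn_integral_cmult, simp, subst nn_integral_gauss_kernel_exp_inner[OF r], rule refl)
  also have "\<dots> = ennreal (exp (- m * a + r\<^sup>2 * (norm (m *\<^sub>R w))\<^sup>2 / 2))"
    by (simp add: ennreal_mult[symmetric] mult_exp_exp)
  also have "- m * a + r\<^sup>2 * (norm (m *\<^sub>R w))\<^sup>2 / 2 = - a\<^sup>2 / (2 * r\<^sup>2 * (norm w)\<^sup>2)"
    unfolding m_def using r nw by (simp add: power_mult_distrib field_simps power2_eq_square)
  finally show ?thesis .
qed

section \<open>Numerical estimates\<close>

lemma one_plus_div_power_le_exp: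
  assumes "0 \<le> x" "n > 0"
  shows "(1 + x / real n) ^ n \<le> exp x"
proof -
  have "(1 + x / real n) ^ n \<le> exp (x / real n) ^ n"
    using assms by (intro power_mono) (auto simp: exp_ge_add_one_self add.commute)
  also have "\<dots> = exp x" using assms by (simp add: exp_of_nat_mult[symmetric])
  finally show ?thesis .
qed

lemma exp_le_div_power:
  assumes "0 \<le> x" "x < real n"
  shows "exp x \<le> (real n / (real n - x)) ^ n"
proof -
  have n: "real n > 0" using assms by simp
  have "1 - x / real n \<le> exp (- (x / real n))"
    using exp_ge_add_one_self[of "- (x / real n)"] by simp
  moreover have "0 < 1 - x / real n" using assms n by (simp add: field_simps)
  ultimately have "exp (x / real n) \<le> real n / (real n - x)"
    using n by (simp add: exp_minus field_simps)
  then have "exp (x / real n) ^ n \<le> (real n / (real n - x)) ^ n"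
    by (intro power_mono) auto
  also have "exp (x / real n) ^ n = exp x" using n by (simp add: exp_of_nat_mult[symmetric])
  finally show ?thesis .
qed

lemma exp_1_4_plus_two_exp_neg_11_8_le: "exp (1/4 :: real) + 2 * exp (- 11/8) \<le> 2"
proof -
  have "exp (1/4 :: real) \<le> (32/31)^8"
    using exp_le_div_power[of "1/4" 8] by simp
  moreover have "(1 + (11/8) / real (8::nat)) ^ 8 \<le> exp (11/8 :: real)"
    by (rule one_plus_div_power_le_exp) auto
  then have "exp (- 11/8 :: real) \<le> (64/75)^8"
    by (simp add: exp_minus field_simps)
  moreover have "(32/31::real)^8 + 2 * (64/75)^8 \<le> 2" by (simp add: power_divide)
  ultimately show ?thesis by simp
qed

lemma exp_9_40_plus_two_exp_neg_41_40_le: "exp (9/40 :: real) + 2 * exp (- 41/40) \<le> 2"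
proof -
  have "exp (9/40 :: real) \<le> (320/311)^8"
    using exp_le_div_power[of "9/40" 8] by simp
  moreover have "(1 + (41/40) / real (32::nat)) ^ 32 \<le> exp (41/40 :: real)"
    by (rule one_plus_div_power_le_exp) auto
  then have "exp (- 41/40 :: real) \<le> (1280/1321)^32"
    by (simp add: exp_minus field_simps)
  moreover have "(320/311::real)^8 + 2 * (1280/1321)^32 \<le> 2" by (simp add: power_divide)
  ultimately show ?thesis by simp
qed

text \<open>With \<open>q = \<eta>\<^sup>2\<close> both exponents are \<open>-1/(2q)\<close> plus a remainder; the two numeric bounds above
  cover \<open>q \<le> 4/5\<close> and \<open>4/5 < q\<close>.\<close>

lemma gaussian_tail_sum_le:
  fixes \<eta> :: real
  assumes "0 < \<eta>" "\<eta> < 1"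
  shows "exp (- (1/\<eta> - \<eta>/4)\<^sup>2 / 2) + 2 * exp (- (2/\<eta> - \<eta>/4)\<^sup>2 / 2) \<le> 2 * exp (- 1 / (2 * \<eta>\<^sup>2))"
proof -
  define q where "q = \<eta>\<^sup>2"
  have q0: "0 < q" and q1: "q < 1" unfolding q_def using assms by (auto simp: power_less_one_iff)
  have e1: "- (1/\<eta> - \<eta>/4)\<^sup>2 / 2 = - 1 / (2 * q) + (1/4 - q/32)"
    unfolding q_def using assms by (simp add: power2_eq_square field_simps)
  have e2: "- (2/\<eta> - \<eta>/4)\<^sup>2 / 2 = - 1 / (2 * q) + (1/2 - 3 / (2*q) - q/32)"
    unfolding q_def using assms by (simp add: power2_eq_square field_simps)
  have rest: "exp (1/4 - q/32) + 2 * exp (1/2 - 3 / (2*q) - q/32) \<le> 2"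
  proof (cases "q \<le> 4/5")
    case True
    have "3 / (2*q) \<ge> 15/8" using True q0 by (simp add: field_simps)
    then have "exp (1/2 - 3 / (2*q) - q/32) \<le> exp (- 11/8)" using q0 by simp
    moreover have "exp (1/4 - q/32) \<le> exp (1/4)" using q0 by simp
    ultimately show ?thesis using exp_1_4_plus_two_exp_neg_11_8_le by linarith
  next
    case False
    have "3 / (2*q) \<ge> 3/2" using q1 q0 by (simp add: field_simps)
    then have "exp (1/2 - 3 / (2*q) - q/32) \<le> exp (- 41/40)" using False by simp
    moreover have "exp (1/4 - q/32) \<le> exp (9/40)" using False by simp
    ultimately show ?thesis using exp_9_40_plus_two_exp_neg_41_40_le by linarith
  qed
  have "exp (- (1/\<eta> - \<eta>/4)\<^sup>2 / 2) + 2 * exp (- (2/\<eta> - \<eta>/4)\<^sup>2 / 2)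
      = exp (- 1 / (2 * q)) * (exp (1/4 - q/32) + 2 * exp (1/2 - 3 / (2*q) - q/32))"
    unfolding e1 e2 exp_add by (simp only: distrib_left mult.left_commute)
  also have "\<dots> \<le> exp (- 1 / (2 * q)) * 2"
    using rest by (intro mult_left_mono) auto
  finally show ?thesis unfolding q_def by (simp add: mult.commute)
qed

section \<open>Gradients\<close>

lemma has_derivative_gradient:
  fixes f :: "'a::euclidean_space \<Rightarrow> real"
  assumes "f differentiable (at x)"
  shows "(f has_derivative (\<lambda>h. gradient f x \<bullet> h)) (at x)"
proof -
  obtain D where D: "(f has_derivative D) (at x)" using assms by (auto simp: differentiable_def)
  have lin: "linear D" using has_derivative_bounded_linear[OF D] bounded_linear.linear by blast
  define v where "v = (\<Sum>b\<in>Basis. D b *\<^sub>R b)"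
  have "D h = v \<bullet> h" for h
  proof -
    have "D h = D (\<Sum>b\<in>Basis. (h \<bullet> b) *\<^sub>R b)" by (simp add: euclidean_representation)
    also have "\<dots> = (\<Sum>b\<in>Basis. (h \<bullet> b) * D b)"
      using lin by (simp add: linear_sum linear_scale)
    also have "\<dots> = (\<Sum>b\<in>Basis. D b * (b \<bullet> h))" by (simp add: inner_commute mult.commute)
    also have "\<dots> = v \<bullet> h" unfolding v_def by (simp add: inner_sum_left)
    finally show ?thesis .
  qed
  then have "D = (\<lambda>h. v \<bullet> h)" by auto
  with D have "(f has_derivative (\<lambda>h. v \<bullet> h)) (at x)" by simp
  then show ?thesis unfolding gradient_def by (rule someI)
qed

lemma gradient_eqI:
  assumes "(F has_derivative (\<lambda>h. v \<bullet> h)) (at x)"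
  shows "gradient F x = v"
proof -
  have "(F has_derivative (\<lambda>h. gradient F x \<bullet> h)) (at x)"
    using assms unfolding gradient_def by (rule someI)
  then have "(\<lambda>h. gradient F x \<bullet> h) = (\<lambda>h. v \<bullet> h)"
    using assms by (rule has_derivative_unique)
  then have "gradient F x \<bullet> (gradient F x - v) = v \<bullet> (gradient F x - v)"
    by metis
  then have "(gradient F x - v) \<bullet> (gradient F x - v) = 0"
    by (simp add: inner_diff_left)
  then show ?thesis by simp
qed

lemma norm_derivative_le_of_local_lipschitz:
  fixes F :: "'a::real_normed_vector \<Rightarrow> 'b::real_normed_vector"
  assumes D: "(F has_derivative D) (at y)"
    and lip: "eventually (\<lambda>z. norm (F z - F y) \<le> K * norm (z - y)) (at y)"
  shows "norm (D h) \<le> K * norm h"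
proof (cases "h = 0")
  case True
  with has_derivative_bounded_linear[OF D] show ?thesis
    by (simp add: linear_simps)
next
  case False
  have lin: "linear D" using has_derivative_bounded_linear[OF D] bounded_linear.linear by blast
  obtain d1 where d1: "d1 > 0" "\<And>z. z \<noteq> y \<Longrightarrow> dist z y < d1 \<Longrightarrow> norm (F z - F y) \<le> K * norm (z - y)"
    using lip unfolding eventually_at by blast
  show ?thesis
  proof (rule field_le_epsilon)
    fix e :: real assume e: "e > 0"
    then have "e / norm h > 0" using False by simp
    then obtain d2 where d2: "d2 > 0" "\<And>x'. 0 < norm (x' - y) \<and> norm (x' - y) < d2 \<longrightarrow>
        norm (F x' - F y - D (x' - y)) / norm (x' - y) < e / norm h"
      using D unfolding has_derivative_at' by blast
    define t where "t = min d1 d2 / (2 * norm h)"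
    have t0: "t > 0" unfolding t_def using d1 d2 False by simp
    have tn: "norm (t *\<^sub>R h) < d1" "norm (t *\<^sub>R h) < d2" "t *\<^sub>R h \<noteq> 0"
      unfolding t_def using d1 d2 False by (auto simp: field_simps)
    have a: "norm (F (y + t *\<^sub>R h) - F y) \<le> K * norm (t *\<^sub>R h)"
      using d1(2)[of "y + t *\<^sub>R h"] tn by (simp add: dist_norm)
    have "norm (F (y + t *\<^sub>R h) - F y - D (t *\<^sub>R h)) / norm (t *\<^sub>R h) < e / norm h"
      using d2(2)[of "y + t *\<^sub>R h"] tn by simp
    then have b: "norm (F (y + t *\<^sub>R h) - F y - D (t *\<^sub>R h)) \<le> e * t"
      using t0 False by (simp add: field_simps)
    have "norm (D (t *\<^sub>R h)) \<le> norm (F (y + t *\<^sub>R h) - F y) + norm (F (y + t *\<^sub>R h) - F y - D (t *\<^sub>R h))"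
      by (metis norm_minus_commute norm_triangle_sub)
    also have "\<dots> \<le> K * (t * norm h) + e * t" using a b t0 by simp
    finally have "t * norm (D h) \<le> t * (K * norm h + e)"
      using lin t0 by (simp add: linear_scale algebra_simps)
    then show "norm (D h) \<le> K * norm h + e" using t0 by simp
  qed
qed

lemma norm_gradient_le_lipschitz:
  fixes f :: "'a::euclidean_space \<Rightarrow> real"
  assumes "f differentiable (at x)" and L: "L-lipschitz_on UNIV f"
  shows "norm (gradient f x) \<le> L"
proof -
  let ?v = "gradient f x"
  have "norm (?v \<bullet> ?v) \<le> L * norm ?v"
    using norm_derivative_le_of_local_lipschitz[OF has_derivative_gradient[OF assms(1)], of L ?v]
      lipschitz_on_normD[OF L] by (auto intro!: always_eventually)
  then have "norm ?v * norm ?v \<le> L * norm ?v"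
    by (simp add: power2_norm_eq_inner[symmetric] power2_eq_square)
  then show ?thesis using lipschitz_on_nonneg[OF L] by (cases "norm ?v = 0") auto
qed

lemma gradient_inner_LIMSEQ:
  fixes f :: "'a::euclidean_space \<Rightarrow> real"
  assumes "f differentiable (at x)"
  shows "(\<lambda>n. (f (x + inverse (real (Suc n)) *\<^sub>R b) - f x) / inverse (real (Suc n)))
           \<longlonglongrightarrow> gradient f x \<bullet> b"
proof -
  have "((\<lambda>t. x + t *\<^sub>R b) has_derivative (\<lambda>t. t *\<^sub>R b)) (at 0)"
    by (auto intro!: derivative_eq_intros)
  moreover have "(f has_derivative (\<lambda>h. gradient f x \<bullet> h)) (at (x + 0 *\<^sub>R b))"
    using has_derivative_gradient[OF assms] by simp
  ultimately have "((\<lambda>t. f (x + t *\<^sub>R b)) has_derivative (\<lambda>t. gradient f x \<bullet> (t *\<^sub>R b))) (at 0)"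
    by (rule has_derivative_compose)
  then have "((\<lambda>t. f (x + t *\<^sub>R b)) has_field_derivative (gradient f x \<bullet> b)) (at 0)"
    unfolding has_field_derivative_def by (rule has_derivative_eq_rhs) (auto simp: fun_eq_iff)
  then have lim: "((\<lambda>t. (f (x + t *\<^sub>R b) - f x) / t) \<longlongrightarrow> gradient f x \<bullet> b) (at 0)"
    unfolding has_field_derivative_iff by simp
  have "filterlim (\<lambda>n. inverse (real (Suc n))) (at (0::real)) sequentially"
    by (rule filterlim_atI) (auto simp del: of_nat_Suc intro: LIMSEQ_inverse_real_of_nat)
  then show ?thesis using filterlim_compose[OF lim] by (simp add: o_def)
qed

lemma borel_measurable_differentiable_on_UNIV:
  "f differentiable_on UNIV \<Longrightarrow> f \<in> borel_measurable borel"
  using differentiable_imp_continuous_on borel_measurable_continuous_onI by blast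

text \<open>Each component of the gradient is a pointwise limit of measurable difference quotients.\<close>

lemma borel_measurable_gradient:
  fixes f :: "'a::euclidean_space \<Rightarrow> real"
  assumes "f differentiable_on UNIV"
  shows "gradient f \<in> borel_measurable borel"
proof -
  have [measurable]: "f \<in> borel_measurable borel"
    using assms by (rule borel_measurable_differentiable_on_UNIV)
  have [measurable]: "(\<lambda>x. gradient f x \<bullet> b) \<in> borel_measurable borel" for b
    by (rule borel_measurable_LIMSEQ_real[OF gradient_inner_LIMSEQ])
       (use assms in \<open>auto simp: differentiable_on_def\<close>)
  have "gradient f = (\<lambda>x. \<Sum>b\<in>Basis. (gradient f x \<bullet> b) *\<^sub>R b)"
    by (simp add: euclidean_representation)
  also have "\<dots> \<in> borel_measurable borel" by measurable
  finally show ?thesis .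
qed

lemma integrable_scaleR_bounded:
  fixes g :: "'a \<Rightarrow> 'b::{banach, second_countable_topology}"
  assumes "integrable M k" "g \<in> borel_measurable M" "\<And>x. norm (g x) \<le> B"
  shows "integrable M (\<lambda>x. k x *\<^sub>R g x)"
proof (rule Bochner_Integration.integrable_bound)
  show "integrable M (\<lambda>x. B * \<bar>k x\<bar>)" using assms(1) by auto
  show "AE x in M. norm (k x *\<^sub>R g x) \<le> norm (B * \<bar>k x\<bar>)"
  proof (rule AE_I2)
    fix x
    have "\<bar>k x\<bar> * norm (g x) \<le> \<bar>k x\<bar> * B" using assms(3) by (intro mult_left_mono) auto
    then show "norm (k x *\<^sub>R g x) \<le> norm (B * \<bar>k x\<bar>)"
      using order_trans[OF norm_ge_zero assms(3)] by (simp add: abs_mult mult.commute)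
  qed
qed (use assms in \<open>measurable\<close>)

section \<open>Differentiation under a convolution integral\<close>

context
  fixes f :: "'a::euclidean_space \<Rightarrow> real" and L :: real
  assumes dif: "f differentiable_on UNIV" and lip: "L-lipschitz_on UNIV f"
begin

declare borel_measurable_differentiable_on_UNIV[OF dif, measurable]
  borel_measurable_gradient[OF dif, measurable]

lemma abs_lipschitz_remainder_le:
  "\<bar>f z - f y - gradient f y \<bullet> (z - y)\<bar> \<le> 2 * L * norm (z - y)"
proof -
  have "\<bar>f z - f y\<bar> \<le> L * norm (z - y)"
    using lipschitz_on_normD[OF lip, of z y] by simp
  moreover have "\<bar>gradient f y \<bullet> (z - y)\<bar> \<le> L * norm (z - y)"
    using Cauchy_Schwarz_ineq2[of "gradient f y" "z - y"]
      norm_gradient_le_lipschitz[of f y L] dif lip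
    by (meson differentiable_on_def UNIV_I mult_right_mono norm_ge_zero order_trans)
  ultimately show ?thesis by linarith
qed

lemma tendsto_shifted_remainder_quotient:
  "((\<lambda>z. \<bar>f (z - t) - f (y - t) - gradient f (y - t) \<bullet> (z - y)\<bar> / norm (z - y)) \<longlongrightarrow> 0) (at y)"
proof -
  let ?p = "y - t"
  have "f differentiable (at ?p)" using dif by (simp add: differentiable_on_def)
  then have "(f has_derivative (\<lambda>h. gradient f ?p \<bullet> h)) (at ?p)" by (rule has_derivative_gradient)
  then have "((\<lambda>z. norm (f z - f ?p - gradient f ?p \<bullet> (z - ?p)) / norm (z - ?p)) \<longlongrightarrow> 0) (at ?p)"
    unfolding has_derivative_iff_norm by simp
  moreover have "filterlim (\<lambda>z. z - t) (at ?p) (at y)"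
    by (rule filterlim_atI) (auto intro!: tendsto_eq_intros simp: eventually_at_filter)
  ultimately have "((\<lambda>z. norm (f (z - t) - f ?p - gradient f ?p \<bullet> (z - t - ?p)) / norm (z - t - ?p))
      \<longlongrightarrow> 0) (at y)"
    by (rule filterlim_compose[unfolded o_def])
  then show ?thesis by (simp add: algebra_simps)
qed

context
  fixes K :: "'a \<Rightarrow> real"
  assumes K_measurable[measurable]: "K \<in> borel_measurable borel"
    and K_nonneg: "\<And>t. 0 \<le> K t" and K_integrable: "integrable lborel K"
    and K_norm_integrable: "integrable lborel (\<lambda>t. K t * norm t)"
begin

lemma integrable_kernel_mult_shift: "integrable lborel (\<lambda>t. K t * f (y - t))"
proof (rule Bochner_Integration.integrable_bound)
  show "integrable lborel (\<lambda>t. \<bar>f y\<bar> * K t + L * (K t * norm t))"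
    using K_integrable K_norm_integrable by auto
  show "AE t in lborel. norm (K t * f (y - t)) \<le> norm (\<bar>f y\<bar> * K t + L * (K t * norm t))"
  proof (rule AE_I2)
    fix t
    have "\<bar>f (y - t)\<bar> \<le> \<bar>f y\<bar> + L * norm t"
      using lipschitz_on_normD[OF lip, of "y - t" y] by simp
    then have "K t * \<bar>f (y - t)\<bar> \<le> K t * (\<bar>f y\<bar> + L * norm t)"
      using K_nonneg by (intro mult_left_mono) auto
    then show "norm (K t * f (y - t)) \<le> norm (\<bar>f y\<bar> * K t + L * (K t * norm t))"
      using K_nonneg[of t] lipschitz_on_nonneg[OF lip] by (simp add: abs_mult algebra_simps)
  qed
qed measurable

lemma integrable_kernel_scaleR_gradient_shift: "integrable lborel (\<lambda>t. K t *\<^sub>R gradient f (y - t))"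
proof (rule integrable_scaleR_bounded[OF K_integrable, where B=L])
  show "norm (gradient f (y - t)) \<le> L" for t
    using dif by (intro norm_gradient_le_lipschitz[OF _ lip]) (simp add: differentiable_on_def)
qed measurable

text \<open>Dominated convergence, with dominating function \<open>2 L K\<close>.\<close>

lemma tendsto_integral_kernel_remainder_quotient:
  "((\<lambda>z. \<integral>t. K t * \<bar>f (z - t) - f (y - t) - gradient f (y - t) \<bullet> (z - y)\<bar> / norm (z - y) \<partial>lborel)
     \<longlongrightarrow> 0) (at y)"
  unfolding tendsto_at_iff_sequentially o_def
proof (intro allI impI)
  fix X :: "nat \<Rightarrow> 'a" assume X: "\<forall>i. X i \<in> UNIV - {y}" and "X \<longlonglongrightarrow> y"
  then have X_at: "filterlim X (at y) sequentially"
    by (auto intro!: filterlim_atI)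
  let ?R = "\<lambda>z t. \<bar>f (z - t) - f (y - t) - gradient f (y - t) \<bullet> (z - y)\<bar>"
  have "(\<lambda>i. \<integral>t. K t * ?R (X i) t / norm (X i - y) \<partial>lborel)
      \<longlonglongrightarrow> integral\<^sup>L (lborel :: 'a measure) (\<lambda>t. 0 :: real)"
  proof (rule integral_dominated_convergence[where w="\<lambda>t. 2 * L * K t" and f="\<lambda>t. 0"
        and s="\<lambda>i t. K t * ?R (X i) t / norm (X i - y)"])
    show "integrable lborel (\<lambda>t. 2 * L * K t)" using K_integrable by simp
    show "AE t in lborel. (\<lambda>i. K t * ?R (X i) t / norm (X i - y)) \<longlonglongrightarrow> 0"
    proof (rule AE_I2)
      fix t
      have "(\<lambda>i. ?R (X i) t / norm (X i - y)) \<longlonglongrightarrow> 0"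
        using filterlim_compose[OF tendsto_shifted_remainder_quotient X_at] by (simp add: o_def)
      then show "(\<lambda>i. K t * ?R (X i) t / norm (X i - y)) \<longlonglongrightarrow> 0"
        using tendsto_mult_right_zero by fastforce
    qed
    show "AE t in lborel. norm (K t * ?R (X i) t / norm (X i - y)) \<le> 2 * L * K t" for i
    proof (rule AE_I2)
      fix t
      have "K t * ?R (X i) t \<le> K t * (2 * L * norm (X i - y))"
        using abs_lipschitz_remainder_le[of "X i - t" "y - t"] K_nonneg
        by (intro mult_left_mono) (auto simp: algebra_simps)
      then show "norm (K t * ?R (X i) t / norm (X i - y)) \<le> 2 * L * K t"
        using X K_nonneg[of t] by (auto simp: abs_mult field_simps)
    qed
  qed simp_all
  then show "(\<lambda>i. \<integral>t. K t * ?R (X i) t / norm (X i - y) \<partial>lborel) \<longlonglongrightarrow> 0" by simp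
qed

lemma has_derivative_kernel_convolution:
  "((\<lambda>z. \<integral>t. K t * f (z - t) \<partial>lborel) has_derivative
     (\<lambda>h. (\<integral>t. K t *\<^sub>R gradient f (y - t) \<partial>lborel) \<bullet> h)) (at y)"
proof -
  define G where "G = (\<lambda>z. \<integral>t. K t * f (z - t) \<partial>lborel)"
  define V where "V = (\<integral>t. K t *\<^sub>R gradient f (y - t) \<partial>lborel)"
  define R where "R = (\<lambda>z t. f (z - t) - f (y - t) - gradient f (y - t) \<bullet> (z - y))"
  define \<Phi> where "\<Phi> = (\<lambda>z. \<integral>t. K t * \<bar>R z t\<bar> / norm (z - y) \<partial>lborel)"
  have remainder: "G z - G y - V \<bullet> (z - y) = (\<integral>t. K t * R z t \<partial>lborel)" for z
  proof -
    have grad: "integrable lborel (\<lambda>t. K t * (gradient f (y - t) \<bullet> (z - y)))"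
      using integrable_inner_left[OF integrable_kernel_scaleR_gradient_shift[of y], of "z - y"] by simp
    have "V \<bullet> (z - y) = (\<integral>t. K t * (gradient f (y - t) \<bullet> (z - y)) \<partial>lborel)"
      unfolding V_def by (subst integral_inner_left[symmetric])
        (simp_all add: integrable_kernel_scaleR_gradient_shift)
    then have "G z - G y - V \<bullet> (z - y)
        = (\<integral>t. K t * f (z - t) - K t * f (y - t) - K t * (gradient f (y - t) \<bullet> (z - y)) \<partial>lborel)"
      unfolding G_def using integrable_kernel_mult_shift[of z] integrable_kernel_mult_shift[of y] grad
      by (simp add: Bochner_Integration.integral_diff)
    also have "\<dots> = (\<integral>t. K t * R z t \<partial>lborel)"
      unfolding R_def by (simp add: algebra_simps)
    finally show ?thesis .
  qed
  have bound: "norm (norm (G z - G y - V \<bullet> (z - y)) / norm (z - y)) \<le> \<Phi> z" for z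
  proof -
    have "\<bar>\<integral>t. K t * R z t \<partial>lborel\<bar> \<le> (\<integral>t. \<bar>K t * R z t\<bar> \<partial>lborel)"
      by (rule integral_abs_bound)
    also have "\<dots> = (\<integral>t. K t * \<bar>R z t\<bar> \<partial>lborel)"
      using K_nonneg by (intro Bochner_Integration.integral_cong) (simp_all add: abs_mult)
    finally have "\<bar>\<integral>t. K t * R z t \<partial>lborel\<bar> / norm (z - y) \<le> (\<integral>t. K t * \<bar>R z t\<bar> \<partial>lborel) / norm (z - y)"
      by (rule divide_right_mono) simp
    also have "\<dots> = \<Phi> z" unfolding \<Phi>_def by simp
    finally show ?thesis unfolding remainder by simp
  qed
  have "(\<Phi> \<longlongrightarrow> 0) (at y)"
    unfolding \<Phi>_def R_def by (rule tendsto_integral_kernel_remainder_quotient)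
  then have "((\<lambda>z. norm (G z - G y - V \<bullet> (z - y)) / norm (z - y)) \<longlongrightarrow> 0) (at y)"
    by (rule Lim_null_comparison[OF always_eventually[OF allI[OF bound]]])
  then have "(G has_derivative (\<lambda>h. V \<bullet> h)) (at y)"
    unfolding has_derivative_iff_norm by (simp add: bounded_linear_inner_right)
  then show ?thesis unfolding G_def V_def .
qed

end

end

lemma gradient_gauss_smooth:
  fixes f :: "'a::euclidean_space \<Rightarrow> real"
  assumes dif: "f differentiable_on UNIV" and lip: "L-lipschitz_on UNIV f" and r: "r > 0"
  shows "gradient (gauss_smooth r f) y = (\<integral>x. gauss_kernel r (y - x) *\<^sub>R gradient f x \<partial>lborel)"
proof -
  have [measurable]: "gradient f \<in> borel_measurable borel" by (rule borel_measurable_gradient[OF dif])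
  have "(gauss_smooth r f has_derivative
          (\<lambda>h. (\<integral>t. gauss_kernel r t *\<^sub>R gradient f (y - t) \<partial>lborel) \<bullet> h)) (at y)"
    unfolding gauss_smooth_def[abs_def]
    by (rule has_derivative_kernel_convolution[OF dif lip borel_measurable_gauss_kernel
          gauss_kernel_nonneg[OF r] integrable_gauss_kernel[OF r] integrable_gauss_kernel_mult_norm[OF r]])
  then have "gradient (gauss_smooth r f) y = (\<integral>t. gauss_kernel r t *\<^sub>R gradient f (y - t) \<partial>lborel)"
    by (rule gradient_eqI)
  also have "\<dots> = (\<integral>x. gauss_kernel r (y - x) *\<^sub>R gradient f x \<partial>lborel)"
    using integral_lborel_reflect[of "\<lambda>x. gauss_kernel r (y - x) *\<^sub>R gradient f x" y] by simp
  finally show ?thesis .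
qed

section \<open>The tilted cutoff\<close>

lemma chi_nonneg: "r > 0 \<Longrightarrow> 0 \<le> chi r t"
  by (auto simp: chi_def field_simps)

lemma chi_le_one: "r > 0 \<Longrightarrow> chi r t \<le> 1"
  by (auto simp: chi_def field_simps)

lemma chi_eq_one:
  assumes "r > 0" "\<bar>t\<bar> \<le> r\<^sup>2 / 2"
  shows "chi r t = 1"
proof -
  have "r\<^sup>2 > 0" using assms by simp
  then have "\<not> r\<^sup>2 \<le> \<bar>t\<bar>" using assms by linarith
  then show ?thesis using assms by (simp add: chi_def)
qed

lemma one_minus_chi_le_indicator: "r > 0 \<Longrightarrow> 1 - chi r t \<le> indicator {t. r\<^sup>2 / 2 < \<bar>t\<bar>} t"
  using chi_nonneg[of r t] by (auto simp: chi_eq_one indicator_def)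

lemma chi_eq_clamp: "r > 0 \<Longrightarrow> chi r = (\<lambda>t. max 0 (min 1 (2 - 2 * \<bar>t\<bar> / r\<^sup>2)))"
  by (auto simp: fun_eq_iff chi_def field_simps)

lemma borel_measurable_chi[measurable]: "r > 0 \<Longrightarrow> chi r \<in> borel_measurable borel"
  by (subst chi_eq_clamp) (auto intro!: borel_measurable_continuous_onI continuous_intros)

lemma chi_eq_left_ramp: "r > 0 \<Longrightarrow> - r\<^sup>2 \<le> t \<Longrightarrow> t \<le> - r\<^sup>2 / 2 \<Longrightarrow> chi r t = 2 + 2 * t / r\<^sup>2"
  by (auto simp: chi_def field_simps)

lemma chi_eq_right_ramp: "r > 0 \<Longrightarrow> r\<^sup>2 / 2 \<le> t \<Longrightarrow> t \<le> r\<^sup>2 \<Longrightarrow> chi r t = 2 - 2 * t / r\<^sup>2"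
  by (auto simp: chi_def field_simps)

definition tilted_chi :: "real \<Rightarrow> real \<Rightarrow> real" where
  "tilted_chi r t = exp (t / r\<^sup>2) * chi r t"

lemma tilted_chi_nonneg: "r > 0 \<Longrightarrow> 0 \<le> tilted_chi r t"
  by (simp add: tilted_chi_def chi_nonneg)

lemma tilted_chi_le_exp_1:
  assumes r: "r > 0"
  shows "tilted_chi r t \<le> exp 1"
proof (cases "\<bar>t\<bar> < r\<^sup>2")
  case True
  then have "exp (t / r\<^sup>2) \<le> exp 1" using r by (simp add: field_simps)
  then show ?thesis
    unfolding tilted_chi_def using chi_nonneg[OF r] chi_le_one[OF r]
    by (metis exp_ge_zero mult.right_neutral mult_mono)
next
  case False
  then show ?thesis by (simp add: tilted_chi_def chi_def)
qed

lemma lipschitz_on_Un_real: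
  fixes F :: "real \<Rightarrow> 'b::metric_space"
  assumes "K-lipschitz_on A F" "K-lipschitz_on B F" "b \<in> A" "b \<in> B" "\<forall>x\<in>A. x \<le> b" "\<forall>x\<in>B. b \<le> x"
  shows "K-lipschitz_on (A \<union> B) F"
proof (rule lipschitz_on_leI)
  fix x y assume xy: "x \<in> A \<union> B" "y \<in> A \<union> B" "x \<le> y"
  have A: "dist (F x) (F y) \<le> K * dist x y" if "x \<in> A" "y \<in> A" for x y
    using lipschitz_onD[OF assms(1)] that by blast
  have B: "dist (F x) (F y) \<le> K * dist x y" if "x \<in> B" "y \<in> B" for x y
    using lipschitz_onD[OF assms(2)] that by blast
  have across: "dist (F x) (F y) \<le> K * dist x y" if "x \<in> A" "y \<in> B" for x y
  proof -
    have "dist (F x) (F y) \<le> K * dist x b + K * dist b y"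
      using dist_triangle[of "F x" "F y" "F b"] A[OF that(1) assms(3)] B[OF assms(4) that(2)] by simp
    also have "\<dots> = K * dist x y"
    proof -
      have "x \<le> b" "b \<le> y" using that assms(5,6) by auto
      then show ?thesis by (simp add: dist_real_def distrib_left[symmetric])
    qed
    finally show ?thesis .
  qed
  show "dist (F x) (F y) \<le> K * dist x y"
    using xy A B across[of x y] across[of y x] by (auto simp: dist_commute)
qed (rule lipschitz_on_nonneg[OF assms(1)])

lemma lipschitz_on_interval_by_derivative:
  fixes F g g' :: "real \<Rightarrow> real"
  assumes deriv: "\<And>x. (g has_real_derivative g' x) (at x)"
    and bound: "\<And>x. a \<le> x \<Longrightarrow> x \<le> b \<Longrightarrow> \<bar>g' x\<bar> \<le> K"
    and eq: "\<And>x. a \<le> x \<Longrightarrow> x \<le> b \<Longrightarrow> F x = g x"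
    and K: "0 \<le> K"
  shows "K-lipschitz_on {a..b} F"
proof (rule lipschitz_on_leI[OF _ K])
  fix s t assume st: "s \<in> {a..b}" "t \<in> {a..b}" "s \<le> t"
  show "dist (F s) (F t) \<le> K * dist s t"
  proof (cases "s = t")
    case False
    with st obtain z where z: "s < z" "z < t" "g t - g s = (t - s) * g' z"
      using MVT2[OF _ deriv] by (metis order_less_le)
    have "\<bar>g t - g s\<bar> = (t - s) * \<bar>g' z\<bar>" using z by (simp add: abs_mult)
    also have "\<dots> \<le> (t - s) * K" using bound[of z] z st by (intro mult_left_mono) auto
    finally show ?thesis using eq st by (simp add: dist_real_def abs_minus_commute mult.commute)
  qed (simp add: K)
qed

lemma lipschitz_tilted_chi_left_ramp:
  assumes r: "r > 0"
  shows "(2 * exp 1 / r\<^sup>2)-lipschitz_on {-r\<^sup>2..-r\<^sup>2/2} (tilted_chi r)"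
proof (rule lipschitz_on_interval_by_derivative
    [where g="\<lambda>t. exp (t / r\<^sup>2) * (2 + 2 * t / r\<^sup>2)" and g'="\<lambda>t. exp (t / r\<^sup>2) * (4 + 2 * t / r\<^sup>2) / r\<^sup>2"])
  show "((\<lambda>t. exp (t / r\<^sup>2) * (2 + 2 * t / r\<^sup>2)) has_real_derivative exp (x / r\<^sup>2) * (4 + 2 * x / r\<^sup>2) / r\<^sup>2) (at x)" for x
    using r by (auto intro!: derivative_eq_intros simp: field_simps)
  show "\<bar>exp (x / r\<^sup>2) * (4 + 2 * x / r\<^sup>2) / r\<^sup>2\<bar> \<le> 2 * exp 1 / r\<^sup>2" if "-r\<^sup>2 \<le> x" "x \<le> -r\<^sup>2/2" for x
  proof -
    have "exp (x / r\<^sup>2) \<le> 1" "0 \<le> 4 + 2 * x / r\<^sup>2" "4 + 2 * x / r\<^sup>2 \<le> 3"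
      using that r by (auto simp: field_simps)
    then have "exp (x / r\<^sup>2) * (4 + 2 * x / r\<^sup>2) \<le> 2 * exp 1"
      using mult_mono[of "exp (x / r\<^sup>2)" 1 "4 + 2 * x / r\<^sup>2" 3] exp_ge_add_one_self[of 1] by simp
    then show ?thesis using \<open>0 \<le> 4 + 2 * x / r\<^sup>2\<close> r by (simp add: abs_mult divide_right_mono)
  qed
qed (use r chi_eq_left_ramp in \<open>auto simp: tilted_chi_def\<close>)

lemma lipschitz_tilted_chi_center:
  assumes r: "r > 0"
  shows "(2 * exp 1 / r\<^sup>2)-lipschitz_on {-r\<^sup>2/2..r\<^sup>2/2} (tilted_chi r)"
proof (rule lipschitz_on_interval_by_derivative
    [where g="\<lambda>t. exp (t / r\<^sup>2)" and g'="\<lambda>t. exp (t / r\<^sup>2) / r\<^sup>2"])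
  show "((\<lambda>t. exp (t / r\<^sup>2)) has_real_derivative exp (x / r\<^sup>2) / r\<^sup>2) (at x)" for x
    using r by (auto intro!: derivative_eq_intros simp: field_simps)
  show "\<bar>exp (x / r\<^sup>2) / r\<^sup>2\<bar> \<le> 2 * exp 1 / r\<^sup>2" if "-r\<^sup>2/2 \<le> x" "x \<le> r\<^sup>2/2" for x
  proof -
    have "x / r\<^sup>2 \<le> 1" using that r by (simp add: field_simps)
    then have "exp (x / r\<^sup>2) \<le> 2 * exp 1" using exp_gt_zero[of 1] by (smt (verit) exp_le_cancel_iff)
    then show ?thesis using r by (simp add: divide_right_mono)
  qed
qed (use r chi_eq_one in \<open>auto simp: tilted_chi_def\<close>)

lemma lipschitz_tilted_chi_right_ramp:
  assumes r: "r > 0"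
  shows "(2 * exp 1 / r\<^sup>2)-lipschitz_on {r\<^sup>2/2..r\<^sup>2} (tilted_chi r)"
proof (rule lipschitz_on_interval_by_derivative
    [where g="\<lambda>t. exp (t / r\<^sup>2) * (2 - 2 * t / r\<^sup>2)" and g'="\<lambda>t. - 2 * (t / r\<^sup>2) * exp (t / r\<^sup>2) / r\<^sup>2"])
  show "((\<lambda>t. exp (t / r\<^sup>2) * (2 - 2 * t / r\<^sup>2)) has_real_derivative - 2 * (x / r\<^sup>2) * exp (x / r\<^sup>2) / r\<^sup>2) (at x)" for x
    using r by (auto intro!: derivative_eq_intros simp: field_simps)
  show "\<bar>- 2 * (x / r\<^sup>2) * exp (x / r\<^sup>2) / r\<^sup>2\<bar> \<le> 2 * exp 1 / r\<^sup>2" if "r\<^sup>2/2 \<le> x" "x \<le> r\<^sup>2" for x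
  proof -
    have "exp (x / r\<^sup>2) \<le> exp 1" "0 \<le> x / r\<^sup>2" "x / r\<^sup>2 \<le> 1"
      using that r by (auto simp: field_simps)
    then have "(x / r\<^sup>2) * exp (x / r\<^sup>2) \<le> 1 * exp 1" by (intro mult_mono) auto
    moreover have "\<bar>x\<bar> = x" using that zero_le_power2[of r] by linarith
    ultimately have "\<bar>- 2 * (x / r\<^sup>2) * exp (x / r\<^sup>2)\<bar> \<le> 2 * exp 1"
      by (simp add: abs_mult)
    moreover have "r\<^sup>2 > 0" using r by simp
    ultimately show ?thesis by (metis abs_divide abs_of_pos divide_right_mono less_eq_real_def)
  qed
qed (use r chi_eq_right_ramp in \<open>auto simp: tilted_chi_def\<close>)

lemma lipschitz_tilted_chi:
  assumes r: "r > 0"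
  shows "(2 * exp 1 / r\<^sup>2)-lipschitz_on UNIV (tilted_chi r)"
proof -
  let ?K = "2 * exp 1 / r\<^sup>2"
  have r2: "0 < r\<^sup>2" using r by simp
  have glue: "?K-lipschitz_on {..c} (tilted_chi r)"
    if "?K-lipschitz_on {..b} (tilted_chi r)" "?K-lipschitz_on {b..c} (tilted_chi r)" "b \<le> c" for b c
  proof -
    have "?K-lipschitz_on ({..b} \<union> {b..c}) (tilted_chi r)"
      using that by (intro lipschitz_on_Un_real[where b=b]) auto
    moreover have "{..b} \<union> {b..c} = {..c}" using that(3) by auto
    ultimately show ?thesis by simp
  qed
  have "?K-lipschitz_on {..-r\<^sup>2} (tilted_chi r)"
    by (auto intro!: lipschitz_onI simp: tilted_chi_def chi_def)
  then have "?K-lipschitz_on {..-r\<^sup>2/2} (tilted_chi r)"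
    by (rule glue[OF _ lipschitz_tilted_chi_left_ramp[OF r]]) (use r2 in simp)
  then have "?K-lipschitz_on {..r\<^sup>2/2} (tilted_chi r)"
    by (rule glue[OF _ lipschitz_tilted_chi_center[OF r]]) (use r2 in simp)
  then have "?K-lipschitz_on {..r\<^sup>2} (tilted_chi r)"
    by (rule glue[OF _ lipschitz_tilted_chi_right_ramp[OF r]]) (use r2 in simp)
  moreover have "?K-lipschitz_on {r\<^sup>2..} (tilted_chi r)"
    by (auto intro!: lipschitz_onI simp: tilted_chi_def chi_def)
  ultimately have "?K-lipschitz_on ({..r\<^sup>2} \<union> {r\<^sup>2..}) (tilted_chi r)"
    by (intro lipschitz_on_Un_real[where b="r\<^sup>2"]) auto
  moreover have "{..r\<^sup>2} \<union> {r\<^sup>2..} = (UNIV :: real set)" by auto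
  ultimately show ?thesis by simp
qed

section \<open>Size and Lipschitz bound of the field\<close>

lemma gauss_kernel_ratio:
  fixes x z c :: "'a::euclidean_space"
  assumes r: "r > 0"
  shows "gauss_kernel r (z - x) / gauss_kernel r (c - x)
       = exp ((x - c) \<bullet> (z - c) / r\<^sup>2) * exp (- (norm (z - c))\<^sup>2 / (2 * r\<^sup>2))"
proof -
  have square: "(norm (z - x))\<^sup>2 = (norm (z - c))\<^sup>2 - 2 * ((x - c) \<bullet> (z - c)) + (norm (c - x))\<^sup>2"
  proof -
    have "z - x = (z - c) - (x - c)" by simp
    then have "(norm (z - x))\<^sup>2 = (norm ((z - c) - (x - c)))\<^sup>2" by metis
    then show ?thesis
      by (simp add: power2_norm_eq_inner inner_diff_left inner_diff_right inner_commute)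
  qed
  have "gauss_kernel r (z - x) / gauss_kernel r (c - x)
      = exp (- (norm (z - x))\<^sup>2 / (2 * r\<^sup>2)) / exp (- (norm (c - x))\<^sup>2 / (2 * r\<^sup>2))"
    using r by (simp add: gauss_kernel_def)
  also have "\<dots> = exp (- (norm (z - x))\<^sup>2 / (2 * r\<^sup>2) - (- (norm (c - x))\<^sup>2 / (2 * r\<^sup>2)))"
    by (rule exp_diff[symmetric])
  also have "- (norm (z - x))\<^sup>2 / (2 * r\<^sup>2) - (- (norm (c - x))\<^sup>2 / (2 * r\<^sup>2))
      = (x - c) \<bullet> (z - c) / r\<^sup>2 + (- (norm (z - c))\<^sup>2 / (2 * r\<^sup>2))"
    unfolding square using r by (simp add: field_simps)
  finally show ?thesis by (simp add: mult_exp_exp)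
qed

definition ell_weight :: "real \<Rightarrow> 'a::euclidean_space \<Rightarrow> 'a \<Rightarrow> 'a \<Rightarrow> real" where
  "ell_weight r c x z = tilted_chi r ((x - c) \<bullet> (z - c)) * exp (- (norm (z - c))\<^sup>2 / (2 * r\<^sup>2))"

lemma ell_eq_ell_weight:
  fixes f :: "'a::euclidean_space \<Rightarrow> real"
  assumes "r > 0"
  shows "ell f c r \<eta> x z = ((if norm (x - c) \<le> (sqrt (real DIM('a)) + 1 / \<eta>) * r then 1 else 0)
      * ell_weight r c x z) *\<^sub>R gradient f x"
  unfolding ell_def ell_weight_def tilted_chi_def gauss_kernel_ratio[OF assms] by (simp add: mult_ac)

lemma ell_weight_nonneg: "r > 0 \<Longrightarrow> 0 \<le> ell_weight r c x z"
  by (simp add: ell_weight_def tilted_chi_nonneg)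

lemma ell_weight_le_exp_1:
  assumes "r > 0"
  shows "ell_weight r c x z \<le> exp 1"
proof -
  have "exp (- (norm (z - c))\<^sup>2 / (2 * r\<^sup>2)) \<le> 1" by simp
  then show ?thesis
    unfolding ell_weight_def using tilted_chi_nonneg[OF assms] tilted_chi_le_exp_1[OF assms]
    by (metis exp_ge_zero mult.right_neutral mult_mono)
qed

lemma abs_exp_diff_le_nonpos:
  fixes a b :: real
  assumes "a \<le> 0" "b \<le> 0"
  shows "\<bar>exp a - exp b\<bar> \<le> \<bar>a - b\<bar>"
proof -
  have "exp t - exp s \<le> t - s" if "s \<le> t" "t \<le> 0" for s t :: real
  proof -
    have "1 + (s - t) \<le> exp (s - t)" by (rule exp_ge_add_one_self)
    moreover have "exp (s - t) \<le> 1" using that by simp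
    ultimately have "0 \<le> 1 - exp (s - t)" "1 - exp (s - t) \<le> t - s" by linarith+
    moreover have "exp t \<le> 1" using that by simp
    ultimately have "exp t * (1 - exp (s - t)) \<le> 1 * (t - s)"
      by (intro mult_mono) auto
    then show ?thesis by (simp add: algebra_simps exp_diff)
  qed
  from this[of a b] this[of b a] assms show ?thesis by (cases "a \<le> b") auto
qed

lemma abs_exp_neg_norm_square_diff_le:
  assumes r: "r > 0"
  shows "\<bar>exp (- (norm (z - c))\<^sup>2 / (2 * r\<^sup>2)) - exp (- (norm (y - c))\<^sup>2 / (2 * r\<^sup>2))\<bar>
    \<le> (norm (z - c) + norm (y - c)) / (2 * r\<^sup>2) * norm (z - y)"
proof -
  have "\<bar>exp (- (norm (z - c))\<^sup>2 / (2 * r\<^sup>2)) - exp (- (norm (y - c))\<^sup>2 / (2 * r\<^sup>2))\<bar>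
      \<le> \<bar>(norm (z - c))\<^sup>2 - (norm (y - c))\<^sup>2\<bar> / (2 * r\<^sup>2)"
    using abs_exp_diff_le_nonpos[of "- (norm (z - c))\<^sup>2 / (2 * r\<^sup>2)" "- (norm (y - c))\<^sup>2 / (2 * r\<^sup>2)"] r
    by (simp add: field_simps abs_divide)
  also have "\<bar>(norm (z - c))\<^sup>2 - (norm (y - c))\<^sup>2\<bar>
      = \<bar>norm (z - c) - norm (y - c)\<bar> * (norm (z - c) + norm (y - c))"
  proof -
    have "(norm (z - c))\<^sup>2 - (norm (y - c))\<^sup>2 = (norm (z - c) - norm (y - c)) * (norm (z - c) + norm (y - c))"
      by (simp add: power2_eq_square algebra_simps)
    then show ?thesis by (simp add: abs_mult)
  qed
  also have "\<dots> \<le> norm (z - y) * (norm (z - c) + norm (y - c))"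
    using norm_triangle_ineq3[of "z - c" "y - c"] by (intro mult_right_mono) auto
  finally show ?thesis using r by (simp add: field_simps)
qed

lemma abs_ell_weight_diff_le:
  assumes r: "r > 0"
  shows "\<bar>ell_weight r c x z - ell_weight r c x y\<bar>
    \<le> (2 * exp 1 / r\<^sup>2 * norm (x - c) + exp 1 * (norm (z - c) + norm (y - c)) / (2 * r\<^sup>2)) * norm (z - y)"
proof -
  define T where "T = (\<lambda>z. tilted_chi r ((x - c) \<bullet> (z - c)))"
  define Q where "Q = (\<lambda>z. exp (- (norm (z - c))\<^sup>2 / (2 * r\<^sup>2)))"
  have Q: "0 \<le> Q z" "Q z \<le> 1" unfolding Q_def by auto
  have T: "0 \<le> T y" "T y \<le> exp 1"
    unfolding T_def using tilted_chi_nonneg[OF r] tilted_chi_le_exp_1[OF r] by auto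
  have "\<bar>T z - T y\<bar> \<le> 2 * exp 1 / r\<^sup>2 * \<bar>(x - c) \<bullet> (z - c) - (x - c) \<bullet> (y - c)\<bar>"
    unfolding T_def using lipschitz_on_normD[OF lipschitz_tilted_chi[OF r]] by simp
  also have "\<dots> \<le> 2 * exp 1 / r\<^sup>2 * (norm (x - c) * norm (z - y))"
    using Cauchy_Schwarz_ineq2[of "x - c" "z - y"] by (intro mult_left_mono) (auto simp: inner_diff_right)
  finally have dT: "\<bar>T z - T y\<bar> \<le> 2 * exp 1 / r\<^sup>2 * norm (x - c) * norm (z - y)" by simp
  have dQ: "\<bar>Q z - Q y\<bar> \<le> (norm (z - c) + norm (y - c)) / (2 * r\<^sup>2) * norm (z - y)"
    unfolding Q_def by (rule abs_exp_neg_norm_square_diff_le[OF r])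
  have "\<bar>ell_weight r c x z - ell_weight r c x y\<bar> = \<bar>(T z - T y) * Q z + T y * (Q z - Q y)\<bar>"
    unfolding ell_weight_def T_def Q_def by (simp add: algebra_simps)
  also have "\<dots> \<le> \<bar>T z - T y\<bar> * \<bar>Q z\<bar> + \<bar>T y\<bar> * \<bar>Q z - Q y\<bar>"
    by (metis abs_mult abs_triangle_ineq)
  also have "\<dots> \<le> \<bar>T z - T y\<bar> * 1 + exp 1 * \<bar>Q z - Q y\<bar>"
    using Q T by (intro add_mono mult_left_mono mult_right_mono) auto
  also have "\<dots> \<le> 2 * exp 1 / r\<^sup>2 * norm (x - c) * norm (z - y)
      + exp 1 * ((norm (z - c) + norm (y - c)) / (2 * r\<^sup>2) * norm (z - y))"
    using dT dQ by (intro add_mono mult_left_mono) auto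
  finally show ?thesis by (simp add: algebra_simps)
qed

lemma norm_ell_le:
  fixes f :: "'a::euclidean_space \<Rightarrow> real"
  assumes "f differentiable (at x)" "L-lipschitz_on UNIV f" "r > 0"
  shows "norm (ell f c r \<eta> x y) \<le> 3 * L"
proof -
  let ?a = "(if norm (x - c) \<le> (sqrt (real DIM('a)) + 1 / \<eta>) * r then 1 else 0) * ell_weight r c x y"
  have "norm (ell f c r \<eta> x y) = \<bar>?a\<bar> * norm (gradient f x)"
    unfolding ell_eq_ell_weight[OF assms(3)] by simp
  also have "\<dots> \<le> 3 * L"
  proof (rule mult_mono)
    show "\<bar>?a\<bar> \<le> 3"
      using ell_weight_nonneg[OF assms(3), of c x y] ell_weight_le_exp_1[OF assms(3), of c x y] exp_le
      by auto
    show "norm (gradient f x) \<le> L" by (rule norm_gradient_le_lipschitz[OF assms(1,2)])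
  qed simp_all
  finally show ?thesis .
qed

lemma ell_weight_lipschitz_constant_le:
  fixes k \<eta> :: real
  assumes "1 \<le> k" "0 < \<eta>" "\<eta> < 1"
  shows "exp 1 * (2 * k + 2 / \<eta> + \<eta> / 4 + 1 / 2) \<le> 20 * k / \<eta>"
proof -
  have "\<eta> * (3 * (2 * k + 2 / \<eta> + \<eta> / 4 + 1 / 2)) = 6 * (k * \<eta>) + 6 + 3 * (\<eta> * \<eta>) / 4 + 3 * \<eta> / 2"
    using assms by (simp add: field_simps)
  also have "\<dots> \<le> 20 * k"
  proof -
    have "k * \<eta> \<le> k" "\<eta> * \<eta> \<le> 1" using assms by (simp_all add: mult_left_le mult_le_one)
    then show ?thesis using assms by linarith
  qed
  finally have "3 * (2 * k + 2 / \<eta> + \<eta> / 4 + 1 / 2) \<le> 20 * k / \<eta>"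
    using assms by (simp add: field_simps)
  moreover have "exp 1 * (2 * k + 2 / \<eta> + \<eta> / 4 + 1 / 2) \<le> 3 * (2 * k + 2 / \<eta> + \<eta> / 4 + 1 / 2)"
    using exp_le assms by (intro mult_right_mono) auto
  ultimately show ?thesis by linarith
qed

text \<open>Near \<open>y\<close> the points \<open>z\<close> stay within \<open>r + \<eta> r / 4\<close> of \<open>c\<close>, and on the support of the
  indicator \<open>\<parallel>x - c\<parallel> \<le> (\<surd>d + 1/\<eta>) r\<close>.\<close>

lemma abs_ell_weight_diff_le_local:
  assumes r: "r > 0" and \<eta>: "0 < \<eta>" "\<eta> < 1"
    and x: "norm (x - c) \<le> (sqrt (real DIM('a)) + 1 / \<eta>) * r"
    and y: "norm (y - c) \<le> \<eta> / 4 * r" and z: "norm (z - y) < r"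
  shows "\<bar>ell_weight r c x z - ell_weight r c x (y::'a::euclidean_space)\<bar>
    \<le> 20 * sqrt (real DIM('a)) / (r * \<eta>) * norm (z - y)"
proof -
  let ?d = "sqrt (real DIM('a))"
  have "norm (z - c) \<le> norm (z - y) + norm (y - c)"
    using norm_triangle_ineq[of "z - y" "y - c"] by simp
  then have zc: "norm (z - c) + norm (y - c) \<le> \<eta> * r / 2 + r" using y z by simp
  have "2 * exp 1 / r\<^sup>2 * norm (x - c) + exp 1 * (norm (z - c) + norm (y - c)) / (2 * r\<^sup>2)
      \<le> 2 * exp 1 / r\<^sup>2 * ((?d + 1 / \<eta>) * r) + exp 1 * (\<eta> * r / 2 + r) / (2 * r\<^sup>2)"
  proof (rule add_mono)
    show "2 * exp 1 / r\<^sup>2 * norm (x - c) \<le> 2 * exp 1 / r\<^sup>2 * ((?d + 1 / \<eta>) * r)"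
      using x by (intro mult_left_mono) auto
    show "exp 1 * (norm (z - c) + norm (y - c)) / (2 * r\<^sup>2) \<le> exp 1 * (\<eta> * r / 2 + r) / (2 * r\<^sup>2)"
      using zc r by (intro divide_right_mono mult_left_mono) auto
  qed
  also have "\<dots> = exp 1 * (2 * ?d + 2 / \<eta> + \<eta> / 4 + 1 / 2) / r"
    using r \<eta> by (simp add: field_simps power2_eq_square)
  also have "\<dots> \<le> 20 * ?d / \<eta> / r"
    using ell_weight_lipschitz_constant_le[of ?d \<eta>] \<eta> r by (intro divide_right_mono) auto
  finally have "2 * exp 1 / r\<^sup>2 * norm (x - c) + exp 1 * (norm (z - c) + norm (y - c)) / (2 * r\<^sup>2)
      \<le> 20 * ?d / (r * \<eta>)" by (simp add: mult.commute)
  then show ?thesis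
    using abs_ell_weight_diff_le[OF r, of c x z y] by (meson mult_right_mono norm_ge_zero order_trans)
qed

lemma onorm_derivative_ell_le:
  fixes f :: "'a::euclidean_space \<Rightarrow> real"
  assumes "f differentiable (at x)" "L-lipschitz_on UNIV f"
    and r: "r > 0" and \<eta>: "0 < \<eta>" "\<eta> < 1" and y: "norm (y - c) \<le> \<eta> / 4 * r"
    and D: "((\<lambda>z. ell f c r \<eta> x z) has_derivative D) (at y)"
  shows "onorm D \<le> 20 * L * sqrt (real DIM('a)) / (r * \<eta>)"
proof -
  define B where "B = 20 * sqrt (real DIM('a)) / (r * \<eta>)"
  have B: "0 \<le> B" unfolding B_def using r \<eta> by simp
  have g: "norm (gradient f x) \<le> L" by (rule norm_gradient_le_lipschitz[OF assms(1,2)])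
  have local: "norm (ell f c r \<eta> x z - ell f c r \<eta> x y) \<le> (B * L) * norm (z - y)"
    if z: "norm (z - y) < r" for z
  proof (cases "norm (x - c) \<le> (sqrt (real DIM('a)) + 1 / \<eta>) * r")
    case True
    have "norm (ell f c r \<eta> x z - ell f c r \<eta> x y)
        = \<bar>ell_weight r c x z - ell_weight r c x y\<bar> * norm (gradient f x)"
      unfolding ell_eq_ell_weight[OF r] using True by (simp add: scaleR_diff_left[symmetric])
    also have "\<dots> \<le> (B * norm (z - y)) * L"
      using abs_ell_weight_diff_le_local[OF r \<eta> True y z] g unfolding B_def
      by (intro mult_mono) auto
    finally show ?thesis by (simp add: mult_ac)
  next
    case False
    then show ?thesis
      using B lipschitz_on_nonneg[OF assms(2)] by (simp add: ell_eq_ell_weight[OF r])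
  qed
  have "eventually (\<lambda>z. norm (ell f c r \<eta> x z - ell f c r \<eta> x y) \<le> (B * L) * norm (z - y)) (at y)"
    unfolding eventually_at using r local by (intro exI[of _ r]) (auto simp: dist_norm)
  then have "onorm D \<le> B * L"
    by (intro onorm_le norm_derivative_le_of_local_lipschitz[OF D])
  then show ?thesis unfolding B_def by (simp add: mult_ac)
qed

section \<open>Bias of the field\<close>

definition ell_cutoff :: "real \<Rightarrow> real \<Rightarrow> 'a::euclidean_space \<Rightarrow> 'a \<Rightarrow> 'a \<Rightarrow> real" where
  "ell_cutoff r \<eta> c y x = chi r ((x - c) \<bullet> (y - c))
     * (if norm (x - c) \<le> (sqrt (real DIM('a)) + 1 / \<eta>) * r then 1 else 0)"

lemma ell_cutoff_nonneg: "r > 0 \<Longrightarrow> 0 \<le> ell_cutoff r \<eta> c y x"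
  by (simp add: ell_cutoff_def chi_nonneg)

lemma ell_cutoff_le_one: "r > 0 \<Longrightarrow> ell_cutoff r \<eta> c y x \<le> 1"
  by (simp add: ell_cutoff_def chi_le_one)

lemma borel_measurable_ell_cutoff[measurable]: "r > 0 \<Longrightarrow> ell_cutoff r \<eta> c y \<in> borel_measurable borel"
  unfolding ell_cutoff_def[abs_def] by measurable

lemma ell_eq_ell_cutoff:
  "ell f c r \<eta> x y = (gauss_kernel r (y - x) / gauss_kernel r (c - x) * ell_cutoff r \<eta> c y x) *\<^sub>R gradient f x"
  unfolding ell_def ell_cutoff_def by (simp add: mult_ac)

lemma integrable_gauss_kernel_reflect:
  "r > 0 \<Longrightarrow> integrable lborel (\<lambda>x. gauss_kernel r (y - x :: 'a::euclidean_space))"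
  using integrable_lborel_reflect_iff[of "gauss_kernel r" y] integrable_gauss_kernel by simp

lemma integral_ell_gauss_measure:
  fixes f :: "'a::euclidean_space \<Rightarrow> real"
  assumes "f differentiable_on UNIV" and r: "r > 0"
  shows "(\<integral>x. ell f c r \<eta> x y \<partial>gauss_measure c r)
       = (\<integral>x. (gauss_kernel r (y - x) * ell_cutoff r \<eta> c y x) *\<^sub>R gradient f x \<partial>lborel)"
proof -
  have [measurable]: "gradient f \<in> borel_measurable borel"
    using assms(1) by (rule borel_measurable_gradient)
  have "(\<integral>x. ell f c r \<eta> x y \<partial>gauss_measure c r)
      = (\<integral>x. gauss_kernel r (x - c) *\<^sub>R ell f c r \<eta> x y \<partial>lborel)"
    unfolding gauss_measure_def using r
    by (subst integral_density) (auto simp: gauss_kernel_nonneg ell_eq_ell_cutoff)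
  also have "\<dots> = (\<integral>x. (gauss_kernel r (y - x) * ell_cutoff r \<eta> c y x) *\<^sub>R gradient f x \<partial>lborel)"
  proof (intro Bochner_Integration.integral_cong refl)
    fix x
    have "gauss_kernel r (x - c) = gauss_kernel r (c - x)" by (rule gauss_kernel_minus_commute)
    moreover have "gauss_kernel r (c - x) > 0" by (rule gauss_kernel_pos[OF r])
    ultimately show "gauss_kernel r (x - c) *\<^sub>R ell f c r \<eta> x y
        = (gauss_kernel r (y - x) * ell_cutoff r \<eta> c y x) *\<^sub>R gradient f x"
      by (simp add: ell_eq_ell_cutoff)
  qed
  finally show ?thesis .
qed

lemma integrable_gauss_kernel_reflect_mult:
  assumes "r > 0" "h \<in> borel_measurable borel" "\<And>x. \<bar>h x\<bar> \<le> 1"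
  shows "integrable lborel (\<lambda>x. gauss_kernel r (y - x :: 'a::euclidean_space) * h x)"
proof -
  have "integrable lborel (\<lambda>x. gauss_kernel r (y - x) *\<^sub>R h x)"
    by (rule integrable_scaleR_bounded[OF integrable_gauss_kernel_reflect[OF assms(1)], of _ 1])
       (use assms in auto)
  then show ?thesis by simp
qed

lemma norm_integral_ell_minus_gradient_le:
  fixes f :: "'a::euclidean_space \<Rightarrow> real"
  assumes dif: "f differentiable_on UNIV" and lip: "L-lipschitz_on UNIV f" and r: "r > 0"
  shows "norm ((\<integral>x. ell f c r \<eta> x y \<partial>gauss_measure c r) - gradient (gauss_smooth r f) y)
    \<le> L * (\<integral>x. gauss_kernel r (y - x) * (1 - ell_cutoff r \<eta> c y x) \<partial>lborel)"
proof -
  have [measurable]: "gradient f \<in> borel_measurable borel" by (rule borel_measurable_gradient[OF dif])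
  have g: "norm (gradient f x) \<le> L" for x
    using dif lip by (intro norm_gradient_le_lipschitz) (auto simp: differentiable_on_def)
  let ?k = "\<lambda>x. gauss_kernel r (y - x)" and ?w = "ell_cutoff r \<eta> c y"
  have [measurable]: "?w \<in> borel_measurable borel" by (rule borel_measurable_ell_cutoff[OF r])
  have w: "0 \<le> ?w x" "?w x \<le> 1" for x using ell_cutoff_nonneg[OF r] ell_cutoff_le_one[OF r] by auto
  have int: "integrable lborel (\<lambda>x. ?k x *\<^sub>R (h x *\<^sub>R gradient f x))"
    if [measurable]: "h \<in> borel_measurable borel" and h: "\<And>x. \<bar>h x\<bar> \<le> 1" for h
  proof (rule integrable_scaleR_bounded[OF integrable_gauss_kernel_reflect[OF r]])
    show "norm (h x *\<^sub>R gradient f x) \<le> 1 * L" for x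
      using mult_mono[OF h[of x] g[of x]] by simp
  qed measurable
  have "(\<integral>x. ell f c r \<eta> x y \<partial>gauss_measure c r) - gradient (gauss_smooth r f) y
      = (\<integral>x. ?k x *\<^sub>R (?w x *\<^sub>R gradient f x) \<partial>lborel) - (\<integral>x. ?k x *\<^sub>R (1 *\<^sub>R gradient f x) \<partial>lborel)"
    by (simp add: integral_ell_gauss_measure[OF dif r] gradient_gauss_smooth[OF dif lip r])
  also have "\<dots> = (\<integral>x. ?k x *\<^sub>R ((?w x - 1) *\<^sub>R gradient f x) \<partial>lborel)"
    using int[of ?w] int[of "\<lambda>_. 1"] w
    by (subst Bochner_Integration.integral_diff[symmetric]) (auto simp: algebra_simps scaleR_diff_left)
  finally have "norm ((\<integral>x. ell f c r \<eta> x y \<partial>gauss_measure c r) - gradient (gauss_smooth r f) y)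
      = norm (\<integral>x. ?k x *\<^sub>R ((?w x - 1) *\<^sub>R gradient f x) \<partial>lborel)"
    by (rule arg_cong)
  also have "\<dots> \<le> (\<integral>x. norm (?k x *\<^sub>R ((?w x - 1) *\<^sub>R gradient f x)) \<partial>lborel)"
    by (rule integral_norm_bound)
  also have "\<dots> \<le> (\<integral>x. L * (?k x * (1 - ?w x)) \<partial>lborel)"
  proof (rule integral_mono)
    show "integrable lborel (\<lambda>x. norm (?k x *\<^sub>R ((?w x - 1) *\<^sub>R gradient f x)))"
      using integrable_norm[OF int[of "\<lambda>x. ?w x - 1"]] w by (simp add: abs_le_iff)
    show "integrable lborel (\<lambda>x. L * (?k x * (1 - ?w x)))"
      using integrable_gauss_kernel_reflect_mult[OF r, of "\<lambda>x. 1 - ?w x"] w by auto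
    show "norm (?k x *\<^sub>R ((?w x - 1) *\<^sub>R gradient f x)) \<le> L * (?k x * (1 - ?w x))" for x
    proof -
      have "0 \<le> ?k x * (1 - ?w x)" using w[of x] gauss_kernel_nonneg[OF r, of "y - x"] by simp
      then have "norm (gradient f x) * (?k x * (1 - ?w x)) \<le> L * (?k x * (1 - ?w x))"
        using g[of x] by (rule mult_right_mono[rotated])
      then show ?thesis using w[of x] gauss_kernel_nonneg[OF r, of "y - x"] by (simp add: abs_mult mult_ac)
    qed
  qed
  finally show ?thesis by simp
qed

lemma one_minus_ell_cutoff_le:
  fixes y c :: "'a::euclidean_space" and r \<eta> :: real
  defines "v \<equiv> y - c"
  defines "a \<equiv> r\<^sup>2 / 2 - (norm v)\<^sup>2"
    and "s \<equiv> sqrt (real DIM('a)) + (1 / \<eta> - \<eta> / 4)"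
  assumes r: "r > 0" and y: "norm (y - c) \<le> \<eta> / 4 * r"
  shows "1 - ell_cutoff r \<eta> c y x
    \<le> indicator {z. s * r < norm z} (x - y) + indicator {z. a < v \<bullet> z} (x - y)
      + indicator {z. a < (- v) \<bullet> z} (x - y)"
proof -
  define T where "T = (x - c) \<bullet> v"
  define I where "I = (if norm (x - c) \<le> (sqrt (real DIM('a)) + 1 / \<eta>) * r then 1 else (0::real))"
  have chi: "0 \<le> chi r T" "chi r T \<le> 1" using chi_nonneg[OF r] chi_le_one[OF r] by auto
  have I: "0 \<le> I" "I \<le> 1" unfolding I_def by auto
  have "0 \<le> (1 - chi r T) * (1 - I)" using chi I by simp
  then have split: "1 - ell_cutoff r \<eta> c y x \<le> (1 - chi r T) + (1 - I)"
    unfolding ell_cutoff_def T_def I_def v_def by (simp add: algebra_simps)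
  have T: "T = v \<bullet> (x - y) + (norm v)\<^sup>2"
  proof -
    have "x - c = (x - y) + v" unfolding v_def by simp
    then show ?thesis
      unfolding T_def by (simp only: inner_add_left inner_commute[of "x - y" v] power2_norm_eq_inner)
  qed
  have "1 - chi r T \<le> indicator {z. a < v \<bullet> z} (x - y) + indicator {z. a < (- v) \<bullet> z} (x - y)"
  proof (cases "r\<^sup>2 / 2 < \<bar>T\<bar>")
    case True
    have nv: "0 \<le> (norm v)\<^sup>2" by simp
    consider "r\<^sup>2 / 2 < T" | "T < - (r\<^sup>2 / 2)" using True by linarith
    then show ?thesis
    proof cases
      case 1
      then have "a < v \<bullet> (x - y)" unfolding a_def T using nv by linarith
      then show ?thesis using chi by (simp add: indicator_def)
    next
      case 2
      then have "a < - (v \<bullet> (x - y))" unfolding a_def T using nv by linarith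
      then show ?thesis using chi by (simp add: indicator_def)
    qed
  next
    case False
    then show ?thesis using one_minus_chi_le_indicator[OF r, of T] by (simp add: indicator_def)
  qed
  moreover have "1 - I \<le> indicator {z. s * r < norm z} (x - y)"
  proof (cases "norm (x - c) \<le> (sqrt (real DIM('a)) + 1 / \<eta>) * r")
    case False
    have "norm (x - c) \<le> norm (x - y) + norm (y - c)" using norm_triangle_ineq[of "x - y" "y - c"] by simp
    then have "s * r < norm (x - y)" using False y unfolding s_def by (simp add: algebra_simps)
    then show ?thesis using I by (simp add: indicator_def)
  qed (simp add: I_def indicator_def)
  ultimately show ?thesis using split by linarith
qed

lemma integral_gauss_kernel_norm_tail_le:
  fixes y :: "'a::euclidean_space"
  assumes r: "r > 0" and \<eta>: "0 < \<eta>" "\<eta> < 1"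
  shows "(\<integral>x. gauss_kernel r (y - x)
      * indicator {z. (sqrt (real DIM('a)) + (1 / \<eta> - \<eta> / 4)) * r < norm z} (x - y) \<partial>lborel)
    \<le> exp (- (1 / \<eta> - \<eta> / 4)\<^sup>2 / 2)"
proof (rule integral_gauss_kernel_translate_le[OF r])
  have "1 < 1 / \<eta>" "\<eta> / 4 < 1" using \<eta> by simp_all
  then have "0 < 1 / \<eta> - \<eta> / 4" by linarith
  then show "(\<integral>\<^sup>+x. ennreal (gauss_kernel r (x::'a)
      * indicator {z. (sqrt (real DIM('a)) + (1 / \<eta> - \<eta> / 4)) * r < norm z} x) \<partial>lborel)
    \<le> ennreal (exp (- (1 / \<eta> - \<eta> / 4)\<^sup>2 / 2))"
    using nn_integral_gauss_kernel_norm_tail[OF r, of "sqrt (real DIM('a)) + (1 / \<eta> - \<eta> / 4)",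
        where 'a='a] by simp
qed auto

lemma integral_gauss_kernel_halfspace_le:
  fixes y w :: "'a::euclidean_space"
  assumes r: "r > 0" and \<eta>: "0 < \<eta>" "\<eta> < 1"
    and w: "norm w \<le> \<eta> / 4 * r" and a: "r\<^sup>2 * (8 - \<eta>\<^sup>2) / 16 \<le> a"
  shows "(\<integral>x. gauss_kernel r (y - x) * indicator {z. a < w \<bullet> z} (x - y) \<partial>lborel)
    \<le> exp (- (2 / \<eta> - \<eta> / 4)\<^sup>2 / 2)"
proof (rule integral_gauss_kernel_translate_le[OF r])
  have "\<eta>\<^sup>2 < 8" using \<eta> power_le_one[of \<eta> 2] by linarith
  then have a0: "0 < a" using a r by (smt (verit) divide_pos_pos mult_pos_pos zero_less_power)
  show "(\<integral>\<^sup>+x. ennreal (gauss_kernel r x * indicator {z. a < w \<bullet> z} x) \<partial>lborel)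
    \<le> ennreal (exp (- (2 / \<eta> - \<eta> / 4)\<^sup>2 / 2))"
  proof (cases "w = 0")
    case True
    then show ?thesis using a0 by simp
  next
    case False
    have "(2 / \<eta> - \<eta> / 4)\<^sup>2 / 2 = (r\<^sup>2 * (8 - \<eta>\<^sup>2) / 16)\<^sup>2 / (2 * r\<^sup>2 * (\<eta> / 4 * r)\<^sup>2)"
      using \<eta> r by (simp add: power2_eq_square field_simps)
    also have "\<dots> \<le> a\<^sup>2 / (2 * r\<^sup>2 * (norm w)\<^sup>2)"
    proof (rule frac_le)
      show "(r\<^sup>2 * (8 - \<eta>\<^sup>2) / 16)\<^sup>2 \<le> a\<^sup>2"
        using a \<open>\<eta>\<^sup>2 < 8\<close> r by (intro power_mono) auto
      show "2 * r\<^sup>2 * (norm w)\<^sup>2 \<le> 2 * r\<^sup>2 * (\<eta> / 4 * r)\<^sup>2"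
        using w by (intro mult_left_mono power_mono) auto
    qed (use False r in auto)
    finally have "exp (- a\<^sup>2 / (2 * r\<^sup>2 * (norm w)\<^sup>2)) \<le> exp (- (2 / \<eta> - \<eta> / 4)\<^sup>2 / 2)"
      by simp
    with nn_integral_gauss_kernel_halfspace_tail[OF r False a0] show ?thesis
      by (meson ennreal_leI order_trans)
  qed
qed auto

lemma integral_ell_cutoff_defect_le:
  fixes y c :: "'a::euclidean_space"
  assumes r: "r > 0" and \<eta>: "0 < \<eta>" "\<eta> < 1" and y: "norm (y - c) \<le> \<eta> / 4 * r"
  shows "(\<integral>x. gauss_kernel r (y - x) * (1 - ell_cutoff r \<eta> c y x) \<partial>lborel)
    \<le> exp (- (1 / \<eta> - \<eta> / 4)\<^sup>2 / 2) + 2 * exp (- (2 / \<eta> - \<eta> / 4)\<^sup>2 / 2)"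
proof -
  define v where "v = y - c"
  define a where "a = r\<^sup>2 / 2 - (norm v)\<^sup>2"
  define s where "s = sqrt (real DIM('a)) + (1 / \<eta> - \<eta> / 4)"
  let ?k = "\<lambda>x. gauss_kernel r (y - x)"
  let ?J = "\<lambda>S x. ?k x * indicator S (x - y)"
  have [measurable]: "ell_cutoff r \<eta> c y \<in> borel_measurable borel" by (rule borel_measurable_ell_cutoff[OF r])
  have int: "integrable lborel (?J S)" if "S \<in> sets borel" for S :: "'a set"
    using that by (intro integrable_gauss_kernel_reflect_mult[OF r]) (auto simp: indicator_def)
  have i1: "integrable lborel (?J {z. s * r < norm z})" by (rule int) measurable
  have i2: "integrable lborel (?J {z. a < v \<bullet> z})" by (rule int) measurable
  have i3: "integrable lborel (?J {z. a < (- v) \<bullet> z})" by (rule int) measurable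
  have nv: "norm v \<le> \<eta> / 4 * r" "norm (- v) \<le> \<eta> / 4 * r" using y unfolding v_def by (auto simp: norm_minus_commute)
  have "(norm v)\<^sup>2 \<le> (\<eta> / 4 * r)\<^sup>2" using nv by (intro power_mono) auto
  then have a: "r\<^sup>2 * (8 - \<eta>\<^sup>2) / 16 \<le> a" unfolding a_def by (simp add: power_mult_distrib field_simps)
  have "(\<integral>x. ?k x * (1 - ell_cutoff r \<eta> c y x) \<partial>lborel)
      \<le> (\<integral>x. ?J {z. s * r < norm z} x + ?J {z. a < v \<bullet> z} x + ?J {z. a < (- v) \<bullet> z} x \<partial>lborel)"
  proof (rule integral_mono)
    show "integrable lborel (\<lambda>x. ?k x * (1 - ell_cutoff r \<eta> c y x))"
    proof (rule integrable_gauss_kernel_reflect_mult[OF r])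
      show "\<bar>1 - ell_cutoff r \<eta> c y x\<bar> \<le> 1" for x
        using ell_cutoff_nonneg[OF r, of \<eta> c y x] ell_cutoff_le_one[OF r, of \<eta> c y x] by simp
    qed measurable
    show "integrable lborel (\<lambda>x. ?J {z. s * r < norm z} x + ?J {z. a < v \<bullet> z} x + ?J {z. a < (- v) \<bullet> z} x)"
      by (intro Bochner_Integration.integrable_add i1 i2 i3)
    show "?k x * (1 - ell_cutoff r \<eta> c y x)
        \<le> ?J {z. s * r < norm z} x + ?J {z. a < v \<bullet> z} x + ?J {z. a < (- v) \<bullet> z} x" for x
      using mult_left_mono[OF one_minus_ell_cutoff_le[OF r y, of x] gauss_kernel_nonneg[OF r, of "y - x"]]
      unfolding v_def a_def s_def by (simp add: distrib_left)
  qed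
  also have "\<dots> = (\<integral>x. ?J {z. s * r < norm z} x \<partial>lborel) + (\<integral>x. ?J {z. a < v \<bullet> z} x \<partial>lborel)
      + (\<integral>x. ?J {z. a < (- v) \<bullet> z} x \<partial>lborel)"
    using i1 i2 i3 by (simp add: Bochner_Integration.integral_add Bochner_Integration.integrable_add)
  also have "\<dots> \<le> exp (- (1 / \<eta> - \<eta> / 4)\<^sup>2 / 2) + exp (- (2 / \<eta> - \<eta> / 4)\<^sup>2 / 2)
      + exp (- (2 / \<eta> - \<eta> / 4)\<^sup>2 / 2)"
  proof (intro add_mono)
    show "(\<integral>x. ?J {z. s * r < norm z} x \<partial>lborel) \<le> exp (- (1 / \<eta> - \<eta> / 4)\<^sup>2 / 2)"
      unfolding s_def by (rule integral_gauss_kernel_norm_tail_le[OF r \<eta>])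
    show "(\<integral>x. ?J {z. a < v \<bullet> z} x \<partial>lborel) \<le> exp (- (2 / \<eta> - \<eta> / 4)\<^sup>2 / 2)"
      by (rule integral_gauss_kernel_halfspace_le[OF r \<eta> nv(1) a])
    show "(\<integral>x. ?J {z. a < (- v) \<bullet> z} x \<partial>lborel) \<le> exp (- (2 / \<eta> - \<eta> / 4)\<^sup>2 / 2)"
      by (rule integral_gauss_kernel_halfspace_le[OF r \<eta> nv(2) a])
  qed
  finally show ?thesis by simp
qed

theorem mainTheorem8:
  fixes f :: "'a::euclidean_space \<Rightarrow> real" and c :: 'a and y :: 'a and r \<eta> L :: real
  assumes "f differentiable_on UNIV"
    and "L-lipschitz_on UNIV f"
    and "r > 0" and "0 < \<eta>" and "\<eta> < 1"
    and "norm (y - c) \<le> \<eta> / 4 * r"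
  shows "norm ((\<integral>x. ell f c r \<eta> x y \<partial>gauss_measure c r) - gradient (gauss_smooth r f) y)
           \<le> 2 * L * exp (- 1 / (2 * \<eta>\<^sup>2))
         \<and> (\<forall>x. norm (ell f c r \<eta> x y) \<le> 3 * L)
         \<and> (\<forall>x D. ((\<lambda>z. ell f c r \<eta> x z) has_derivative D) (at y)
              \<longrightarrow> onorm D \<le> 20 * L * sqrt (real DIM('a)) / (r * \<eta>))"
proof (intro conjI allI impI)
  have L: "0 \<le> L" using lipschitz_on_nonneg[OF assms(2)] .
  have "norm ((\<integral>x. ell f c r \<eta> x y \<partial>gauss_measure c r) - gradient (gauss_smooth r f) y)
      \<le> L * (exp (- (1 / \<eta> - \<eta> / 4)\<^sup>2 / 2) + 2 * exp (- (2 / \<eta> - \<eta> / 4)\<^sup>2 / 2))"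
    using norm_integral_ell_minus_gradient_le[OF assms(1-3)]
      mult_left_mono[OF integral_ell_cutoff_defect_le[OF assms(3-6)] L] by (rule order_trans)
  also have "\<dots> \<le> L * (2 * exp (- 1 / (2 * \<eta>\<^sup>2)))"
    by (rule mult_left_mono[OF gaussian_tail_sum_le[OF assms(4,5)] L])
  finally show "norm ((\<integral>x. ell f c r \<eta> x y \<partial>gauss_measure c r) - gradient (gauss_smooth r f) y)
      \<le> 2 * L * exp (- 1 / (2 * \<eta>\<^sup>2))" by (simp add: mult_ac)
  have dif: "f differentiable (at x)" for x using assms(1) by (simp add: differentiable_on_def)
  show "norm (ell f c r \<eta> x y) \<le> 3 * L" for x
    by (rule norm_ell_le[OF dif assms(2,3)])
  show "onorm D \<le> 20 * L * sqrt (real DIM('a)) / (r * \<eta>)"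
    if "((\<lambda>z. ell f c r \<eta> x z) has_derivative D) (at y)" for x D
    by (rule onorm_derivative_ell_le[OF dif assms(2-6) that])
qed

end
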